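(* Let $\alpha\in(0,1)$, $H\in(0,\tfrac12)$, $T>0$, and let $\rho$ be a real number with $-\frac{\alpha}{4}-\frac{H\alpha}{2}<\rho<\frac{\alpha+1}{4}-\frac{H\alpha}{2}$ such that $\sum_{i=1}^\infty\|A^{\rho}Q^{1/2}\phi_i\|^2=\sum_i\lambda_i^{2\rho}q_i<\infty$. Set $\kappa=\frac{\alpha}{2}+H\alpha+2\rho$ and assume $\kappa>0$. Let $\tau=T/N$ for a positive integer $N$ and $t_j=j\tau$. Then there is a constant $C$ independent of $\tau$ and $n$ such that for all $1\le n\le N$, $$\mathrm{E}\Big[\Big\|\sum_{j=0}^{n-1}\int_{t_j}^{t_{j+1}}\mathscr{C}(t_n-s)\big(B^Q_H(s)-B^Q_H(t_j)\big)\,\mathrm{d}s\Big\|^2\Big]\le\begin{cases}C\tau^{\frac{2\kappa}{\alpha}}, & 0<\kappa\le\frac{\alpha}{2}+H\alpha,\\ C\tau^{2H+1}, & \kappa>\frac{\alpha}{2}+H\alpha.\end{cases}$$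
   Context: $D\subseteq\mathbb{R}^d$ ($d\in\{1,2,3\}$) is a bounded Lipschitz domain; $\|\cdot\|$, $\langle\cdot,\cdot\rangle$ are the $L^2(D)$ norm and inner product. $A=-\Delta$ with homogeneous Dirichlet boundary conditions, with orthonormal eigenpairs $(\lambda_i,\phi_i)$; $A^{\nu/2}u=\sum_i\lambda_i^{\nu/2}\langle u,\phi_i\rangle\phi_i$. $\mathscr{C}(t)=\cos(A^{\alpha/2}t)$ is defined spectrally: $\mathscr{C}(t)u=\sum_i\cos(\lambda_i^{\alpha/2}t)\langle u,\phi_i\rangle\phi_i$. $Q$ is self-adjoint nonnegative with $Q\phi_i=q_i\phi_i$, $q_i\ge0$. $B^Q_H(t)=\sum_i\sqrt{q_i}\xi^i_H(t)\phi_i$, where $\xi^i_H$ are mutually independent real fractional Brownian motions with Hurst parameter $H$, i.e. centered Gaussian processes with $\mathrm{E}[\xi^i_H(t)\xi^i_H(s)]=\frac12(t^{2H}+s^{2H}-|t-s|^{2H})$. *)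

theory Defs
  imports "HOL-Probability.Probability"
begin

definition fbm_cov :: "real \<Rightarrow> real \<Rightarrow> real \<Rightarrow> real" where
  "fbm_cov H t s = (t powr (2*H) + s powr (2*H) - \<bar>t - s\<bar> powr (2*H)) / 2"

definition centered_gaussian_process ::
  "'w measure \<Rightarrow> real set \<Rightarrow> (real \<Rightarrow> 'w \<Rightarrow> real) \<Rightarrow> (real \<Rightarrow> real \<Rightarrow> real) \<Rightarrow> bool" where
  "centered_gaussian_process M I X R \<longleftrightarrow>
     (\<forall>t\<in>I. X t \<in> borel_measurable M) \<and>
     (\<forall>(n::nat) (t::nat \<Rightarrow> real) (a::nat \<Rightarrow> real). (\<forall>k<n. t k \<in> I) \<longrightarrow>
        (let Y = (\<lambda>\<omega>. \<Sum>k<n. a k * X (t k) \<omega>);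
             v = (\<Sum>k<n. \<Sum>l<n. a k * a l * R (t k) (t l))
         in (v > 0 \<longrightarrow> distributed M lborel Y (normal_density 0 (sqrt v))) \<and>
            (v \<le> 0 \<longrightarrow> (AE \<omega> in M. Y \<omega> = 0))))"

definition is_fbm :: "'w measure \<Rightarrow> real \<Rightarrow> (real \<Rightarrow> 'w \<Rightarrow> real) \<Rightarrow> bool" where
  "is_fbm M H X \<longleftrightarrow> centered_gaussian_process M {0..} X (fbm_cov H) \<and>
     (\<forall>\<omega>\<in>space M. continuous_on {0..} (\<lambda>t. X t \<omega>))"

end

theory Submission
  imports Defs
begin

text \<open>
  For \<open>0 < H < 1\<close> the covariance of fractional Brownian motion has the spectral representation
  \<open>2 c\<^sub>H R(t,s) = \<integral> w(\<omega>) Re ((cis(\<omega>t) - 1) * cnj (cis(\<omega>s) - 1)) d\<omega>\<close> with the weight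
  \<open>w(\<omega>) = \<omega> powr (-1-2H)\<close> on \<open>(0,\<infinity>)\<close>. Hence the second moment of a finite combination of
  increments is \<open>1/(2 c\<^sub>H)\<close> times the \<open>w\<close>-weighted energy of its Fourier transform, and Riemann
  sums together with Fatou's lemma carry this over, as an inequality, to the integral that forms one
  eigenmode of the error. Rescaling time by \<open>\<tau>\<close> reduces to unit steps, where the transform is a
  Dirichlet kernel times the transform of a single step. Bounding the latter separately for low and
  high frequencies, and integrating the Dirichlet kernel one period at a time, gives
  \<open>E e\<^sub>i\<^sup>2 \<le> K T \<tau> powr (1+2H) (\<mu>\<^sub>i \<tau>) powr (-\<gamma>)\<close> with \<open>\<mu>\<^sub>i = \<lambda>\<^sub>i powr (\<alpha>/2)\<close>, for every
  \<open>0 \<le> \<gamma> \<le> 1+2H\<close>. Choosing \<open>\<gamma> = -4\<rho>/\<alpha>\<close> when \<open>\<rho> \<le> 0\<close> and \<open>\<gamma> = 0\<close> otherwise, and summing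
  against the \<open>q\<^sub>i\<close>, gives the claim.
\<close>

section \<open>Riemann sums and elementary estimates\<close>

lemma one_minus_cos_le: "1 - cos t \<le> (t::real)\<^sup>2 / 2"
proof -
  have "(sin (t/2))\<^sup>2 \<le> (t/2)\<^sup>2"
    using abs_sin_x_le_abs_x[of "t/2"] by (simp add: abs_le_square_iff[symmetric])
  then show ?thesis using cos_double_sin[of "t/2"] by (simp add: power2_eq_square)
qed

lemma norm_cis_diff_le: "cmod (cis a - cis b) \<le> \<bar>a - b\<bar>"
proof -
  have "cis a - cis b = cis b * (cis (a - b) - 1)" by (simp add: algebra_simps cis_mult)
  then have "(cmod (cis a - cis b))\<^sup>2 = (cos (a - b) - 1)\<^sup>2 + (sin (a - b))\<^sup>2"
    by (simp add: norm_mult cmod_power2)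
  also have "\<dots> = 2 * (1 - cos (a - b))"
    using sin_cos_squared_add[of "a - b"] by (simp add: power2_eq_square algebra_simps)
  also have "\<dots> \<le> (a - b)\<^sup>2" using one_minus_cos_le[of "a - b"] by simp
  finally show ?thesis by (metis abs_le_square_iff abs_norm_cancel)
qed

lemma norm_cis_diff_le_2: "cmod (cis a - cis b) \<le> 2"
  using norm_triangle_ineq4[of "cis a" "cis b"] by simp

lemma integral_uniform_split:
  fixes f :: "real \<Rightarrow> 'a::banach"
  assumes "continuous_on {a..a + h} f" "0 \<le> h" "0 < m" "k \<le> m"
  shows "integral {a..a + real k * (h / real m)} f =
    (\<Sum>p<k. integral {a + real p * (h / real m)..a + real (Suc p) * (h / real m)} f)"
  using assms(4)
proof (induction k)
  case (Suc k)
  let ?d = "h / real m"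
  have "real (Suc k) * ?d \<le> real m * ?d"
    using Suc.prems assms(2) by (intro mult_right_mono) auto
  then have "f integrable_on {a..a + real (Suc k) * ?d}"
    using assms by (intro integrable_continuous_real continuous_on_subset[OF assms(1)]) auto
  then have "integral {a..a + real (Suc k) * ?d} f =
      integral {a..a + real k * ?d} f + integral {a + real k * ?d..a + real (Suc k) * ?d} f"
    using assms(2) by (intro Henstock_Kurzweil_Integration.integral_combine[symmetric])
      (auto simp: distrib_right divide_right_mono)
  then show ?case using Suc by simp
qed simp

lemma norm_integral_minus_left_endpoint_le:
  fixes f :: "real \<Rightarrow> 'a::euclidean_space"
  assumes "f integrable_on {c..c + d}" "0 \<le> d" "\<And>x. x \<in> {c..c + d} \<Longrightarrow> norm (f x - f c) \<le> e"
  shows "norm (integral {c..c + d} f - d *\<^sub>R f c) \<le> e * d"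
proof -
  have "((\<lambda>x. f x - f c) has_integral (integral {c..c + d} f - d *\<^sub>R f c)) (cbox c (c + d))"
    using has_integral_diff[OF integrable_integral[OF assms(1)] has_integral_const_real[of "f c" c "c + d"]]
      assms(2) by simp
  moreover have "0 \<le> e" using assms(2) order_trans[OF norm_ge_zero assms(3)[of c]] by simp
  ultimately have "norm (integral {c..c + d} f - d *\<^sub>R f c) \<le> e * Henstock_Kurzweil_Integration.content (cbox c (c + d))"
    using assms(3) by (intro has_integral_bound) auto
  then show ?thesis using assms(2) by simp
qed

lemma riemann_sum_error_le:
  fixes f :: "real \<Rightarrow> 'a::euclidean_space"
  assumes cont: "continuous_on {a..a + h} f" and h: "0 \<le> h" and m: "0 < m"
    and osc: "\<And>x y. x \<in> {a..a + h} \<Longrightarrow> y \<in> {a..a + h} \<Longrightarrow> \<bar>x - y\<bar> \<le> h / real m \<Longrightarrow> norm (f x - f y) \<le> e"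
  shows "norm ((\<Sum>p<m. (h / real m) *\<^sub>R f (a + real p * (h / real m))) - integral {a..a + h} f) \<le> h * e"
proof -
  let ?d = "h / real m" and ?c = "\<lambda>p. a + real p * (h / real m)"
  have each: "norm (?d *\<^sub>R f (?c p) - integral {?c p..?c (Suc p)} f) \<le> e * ?d" if "p < m" for p
  proof -
    have eq: "?c (Suc p) = ?c p + ?d" by (simp add: algebra_simps add_divide_distrib)
    have "real (Suc p) * ?d \<le> real m * ?d" using that h by (intro mult_right_mono) auto
    then have "?c p + ?d \<le> a + h" using m unfolding eq[symmetric] by simp
    moreover have "a \<le> ?c p" using h by simp
    ultimately have sub: "{?c p..?c p + ?d} \<subseteq> {a..a + h}" by auto
    have "norm (integral {?c p..?c p + ?d} f - ?d *\<^sub>R f (?c p)) \<le> e * ?d"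
    proof (rule norm_integral_minus_left_endpoint_le)
      show "f integrable_on {?c p..?c p + ?d}"
        by (rule integrable_continuous_real, rule continuous_on_subset[OF cont sub])
      fix x assume "x \<in> {?c p..?c p + ?d}"
      then show "norm (f x - f (?c p)) \<le> e" using sub by (intro osc) auto
    qed (use h in simp)
    then show ?thesis unfolding eq by (simp add: norm_minus_commute)
  qed
  have "integral {a..a + h} f = (\<Sum>p<m. integral {?c p..?c (Suc p)} f)"
    using integral_uniform_split[OF cont h m, of m] m by simp
  then have "norm ((\<Sum>p<m. ?d *\<^sub>R f (?c p)) - integral {a..a + h} f)
      = norm (\<Sum>p<m. ?d *\<^sub>R f (?c p) - integral {?c p..?c (Suc p)} f)"
    by (simp add: sum_subtractf)
  also have "\<dots> \<le> (\<Sum>p<m. e * ?d)"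
    by (rule order_trans[OF norm_sum sum_mono]) (use each in auto)
  also have "\<dots> = h * e" using m by simp
  finally show ?thesis .
qed

lemma riemann_sum_tendsto:
  fixes f :: "real \<Rightarrow> 'a::euclidean_space"
  assumes cont: "continuous_on {a..a + h} f" and h: "0 \<le> h"
  shows "(\<lambda>m. \<Sum>p<m. (h / real m) *\<^sub>R f (a + real p * (h / real m))) \<longlonglongrightarrow> integral {a..a + h} f"
proof (rule LIMSEQ_I)
  fix e :: real assume "0 < e"
  define e' where "e' = e / (h + 1)"
  have e': "0 < e'" using \<open>0 < e\<close> h by (simp add: e'_def)
  obtain d where d: "0 < d"
    and dd: "\<And>x y. x \<in> {a..a + h} \<Longrightarrow> y \<in> {a..a + h} \<Longrightarrow> dist y x < d \<Longrightarrow> dist (f y) (f x) < e'"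
    using compact_uniformly_continuous[OF cont] e' unfolding uniformly_continuous_on_def by fastforce
  obtain M :: nat where M: "h / d < real M" using reals_Archimedean2 by blast
  show "\<exists>no. \<forall>m\<ge>no. norm ((\<Sum>p<m. (h / real m) *\<^sub>R f (a + real p * (h / real m))) - integral {a..a + h} f) < e"
  proof (intro exI[of _ "Suc M"] allI impI)
    fix m assume mM: "Suc M \<le> m"
    have "h < d * real M" using M d by (simp add: field_simps)
    also have "\<dots> \<le> d * real m" using mM d by (intro mult_left_mono) auto
    finally have "h / real m < d" using mM by (simp add: field_simps)
    then have "norm ((\<Sum>p<m. (h / real m) *\<^sub>R f (a + real p * (h / real m))) - integral {a..a + h} f) \<le> h * e'"
      using mM dd by (intro riemann_sum_error_le[OF cont h]) (auto simp: dist_norm dist_real_def less_imp_le)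
    also have "\<dots> < e" using h \<open>0 < e\<close> by (simp add: e'_def field_simps)
    finally show "norm ((\<Sum>p<m. (h / real m) *\<^sub>R f (a + real p * (h / real m))) - integral {a..a + h} f) < e" .
  qed
qed

lemma norm_add_power2_le: "(norm (a + b))\<^sup>2 \<le> 2 * (norm a)\<^sup>2 + 2 * (norm (b :: 'a::real_normed_vector))\<^sup>2"
proof -
  have "(norm (a + b))\<^sup>2 \<le> (norm a + norm b)\<^sup>2" by (intro power_mono norm_triangle_ineq) auto
  also have "\<dots> \<le> 2 * (norm a)\<^sup>2 + 2 * (norm b)\<^sup>2"
    using zero_le_power2[of "norm a - norm b"] unfolding power2_sum power2_diff by linarith
  finally show ?thesis .
qed

lemma nn_integral_le_of_tendsto:
  fixes f :: "nat \<Rightarrow> 'a \<Rightarrow> ennreal"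
  assumes "\<And>m. f m \<in> borel_measurable M"
    and "\<And>x. x \<in> space M \<Longrightarrow> (\<lambda>m. f m x) \<longlonglongrightarrow> g x"
    and "(\<lambda>m. integral\<^sup>N M (f m)) \<longlonglongrightarrow> L"
  shows "integral\<^sup>N M g \<le> L"
proof -
  have "integral\<^sup>N M g = (\<integral>\<^sup>+x. liminf (\<lambda>m. f m x) \<partial>M)"
    using assms(2) by (intro nn_integral_cong) (simp add: lim_imp_Liminf[symmetric])
  also have "\<dots> \<le> liminf (\<lambda>m. integral\<^sup>N M (f m))"
    by (rule nn_integral_liminf) (use assms(1) in measurable)
  also have "\<dots> = L" using assms(3) by (simp add: lim_imp_Liminf)
  finally show ?thesis .
qed

lemma nn_integral_powr_from_0:
  assumes "a > -1" "0 \<le> c"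
  shows "(\<integral>\<^sup>+x. ennreal (indicator {0..c} x * x powr a) \<partial>lborel) = ennreal (c powr (a+1) / (a+1))"
proof (rule nn_integral_has_integral_lborel)
  have "((\<lambda>x. if x \<in> {0..c} then x powr a else 0) has_integral (c powr (a+1) / (a+1))) UNIV"
    using has_integral_powr_from_0[OF assms] by (subst has_integral_restrict_UNIV)
  then show "((\<lambda>x. indicator {0..c} x * x powr a) has_integral (c powr (a+1) / (a+1))) UNIV"
    by (rule has_integral_eq_rhs[OF has_integral_cong[THEN iffD1, rotated]]) (auto simp: indicator_def)
qed auto

lemma nn_integral_powr_to_inf:
  assumes "e < -1" "0 < A"
  shows "(\<integral>\<^sup>+x. ennreal (indicator {A..} x * x powr e) \<partial>lborel) = ennreal (-(A powr (e+1)) / (e+1))"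
proof (rule nn_integral_has_integral_lborel)
  have "((\<lambda>x. if x \<in> {A..} then x powr e else 0) has_integral (-(A powr (e+1)) / (e+1))) UNIV"
    using has_integral_powr_to_inf[OF assms] by (subst has_integral_restrict_UNIV)
  then show "((\<lambda>x. indicator {A..} x * x powr e) has_integral (-(A powr (e+1)) / (e+1))) UNIV"
    by (rule has_integral_eq_rhs[OF has_integral_cong[THEN iffD1, rotated]]) (auto simp: indicator_def)
qed auto

section \<open>Spectral representation of fractional Brownian motion\<close>

definition fbm_weight :: "real \<Rightarrow> real \<Rightarrow> real" where
  "fbm_weight H \<omega> = indicator {0<..} \<omega> * \<omega> powr (-1-2*H)"

lemma fbm_weight_nonneg [simp]: "0 \<le> fbm_weight H \<omega>"
  by (simp add: fbm_weight_def)

lemma fbm_weight_measurable [measurable]: "fbm_weight H \<in> borel_measurable borel"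
  unfolding fbm_weight_def by measurable

lemma fbm_weight_mult_power2: "0 < \<omega> \<Longrightarrow> fbm_weight H \<omega> * \<omega>\<^sup>2 = \<omega> powr (1 - 2*H)"
  by (simp add: fbm_weight_def powr_add[symmetric] flip: powr_numeral)

definition spectral_energy :: "real \<Rightarrow> (real \<Rightarrow> complex) \<Rightarrow> ennreal" where
  "spectral_energy H f = (\<integral>\<^sup>+\<omega>. ennreal (fbm_weight H \<omega> * (cmod (f \<omega>))\<^sup>2) \<partial>lborel)"

text \<open>The constant \<open>c\<^sub>H\<close>; for \<open>H \<notin> (0,1)\<close> the integral diverges and \<^const>\<open>enn2real\<close> returns the junk value 0.\<close>
definition fbm_const :: "real \<Rightarrow> real" where
  "fbm_const H = enn2real (\<integral>\<^sup>+v. ennreal (fbm_weight H v * (1 - cos v)) \<partial>lborel)"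

lemma nn_integral_fbm_weight_finite:
  assumes H: "0 < H" "H < 1" and C: "0 \<le> C" and g: "\<And>\<omega>. 0 < \<omega> \<Longrightarrow> g \<omega> \<le> C * min (\<omega>\<^sup>2) 1"
  shows "(\<integral>\<^sup>+\<omega>. ennreal (fbm_weight H \<omega> * g \<omega>) \<partial>lborel) < \<infinity>"
proof -
  have "ennreal (fbm_weight H \<omega> * g \<omega>) \<le>
      ennreal C * ennreal (indicator {0..1} \<omega> * \<omega> powr (1-2*H)) +
      ennreal C * ennreal (indicator {1..} \<omega> * \<omega> powr (-1-2*H))" for \<omega>
  proof (cases "0 < \<omega>")
    case True
    have le: "fbm_weight H \<omega> * g \<omega> \<le> C * (\<omega> powr (-1-2*H) * min (\<omega>\<^sup>2) 1)"
      using g[OF True] True C by (simp add: fbm_weight_def mult_left_mono mult.left_commute)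
    show ?thesis
    proof (cases "\<omega> \<le> 1")
      case True
      have "\<omega>\<^sup>2 \<le> 1" using True \<open>0 < \<omega>\<close> by (simp add: power_le_one)
      then have "\<omega> powr (-1-2*H) * min (\<omega>\<^sup>2) 1 = \<omega> powr (1-2*H)"
        using \<open>0 < \<omega>\<close> by (simp add: min_def powr_add[symmetric] flip: powr_numeral)
      then show ?thesis using le True C \<open>0 < \<omega>\<close>
        by (intro order_trans[OF _ add_increasing2]) (auto simp: ennreal_mult[symmetric] intro!: ennreal_leI)
    next
      case False
      then have "1 \<le> \<omega>\<^sup>2" by (simp add: one_le_power)
      then have "min (\<omega>\<^sup>2) 1 = 1" by simp
      then show ?thesis using le C False
        by (intro order_trans[OF _ add_increasing]) (auto simp: ennreal_mult[symmetric] min_def intro!: ennreal_leI)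
    qed
  qed (simp add: fbm_weight_def)
  then have "(\<integral>\<^sup>+\<omega>. ennreal (fbm_weight H \<omega> * g \<omega>) \<partial>lborel) \<le>
      (\<integral>\<^sup>+\<omega>. ennreal C * ennreal (indicator {0..1} \<omega> * \<omega> powr (1-2*H)) +
        ennreal C * ennreal (indicator {1..} \<omega> * \<omega> powr (-1-2*H)) \<partial>lborel)"
    by (intro nn_integral_mono)
  also have "\<dots> = ennreal C * ennreal (1 / (2 - 2*H)) + ennreal C * ennreal (1 / (2*H))"
    using H by (simp add: nn_integral_add nn_integral_cmult nn_integral_powr_from_0 nn_integral_powr_to_inf)
  also have "\<dots> < \<infinity>" by (simp add: ennreal_mult_less_top)
  finally show ?thesis .
qed

lemma one_minus_cos_le_min: "1 - cos v \<le> 2 * min ((v::real)\<^sup>2) 1"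
proof -
  have "0 \<le> v\<^sup>2" by (rule zero_le_power2)
  then show ?thesis using one_minus_cos_le[of v] cos_ge_minus_one[of v] unfolding min_def by (split if_split) linarith
qed

lemma nn_integral_fbm_const:
  assumes "0 < H" "H < 1"
  shows "(\<integral>\<^sup>+v. ennreal (fbm_weight H v * (1 - cos v)) \<partial>lborel) = ennreal (fbm_const H)"
  using nn_integral_fbm_weight_finite[OF assms, of 2 "\<lambda>v. 1 - cos v"] one_minus_cos_le_min
  unfolding fbm_const_def by (simp add: ennreal_enn2real_if less_top)

lemma fbm_const_pos:
  assumes H: "0 < H" "H < 1"
  shows "0 < fbm_const H"
proof -
  define c where "c = (1 - cos 1) * 2 powr (-1-2*H)"
  have c: "0 < c"
    using cos_monotone_0_pi[of 0 1] pi_gt3 by (simp add: c_def)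
  have "ennreal c * indicator {1..2} v \<le> ennreal (fbm_weight H v * (1 - cos v))" for v
  proof (cases "v \<in> {1..2}")
    case True
    have "cos v \<le> cos 1" using True pi_gt3 by (intro cos_monotone_0_pi_le) auto
    moreover have "2 powr (-1-2*H) \<le> v powr (-1-2*H)" using True H by (intro powr_mono2') auto
    ultimately have "c \<le> (1 - cos v) * v powr (-1-2*H)"
      unfolding c_def using cos_monotone_0_pi[of 0 1] pi_gt3 by (intro mult_mono) auto
    then show ?thesis using True by (simp add: fbm_weight_def mult.commute ennreal_leI)
  qed simp
  then have "ennreal c * emeasure lborel {1..2::real} \<le> ennreal (fbm_const H)"
    unfolding nn_integral_fbm_const[OF H, symmetric]
    by (subst nn_integral_cmult_indicator[symmetric]) (auto intro!: nn_integral_mono simp del: ennreal_mult')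
  then show ?thesis using c by (simp add: ennreal_le_iff2)
qed

lemma nn_integral_fbm_weight_one_minus_cos:
  assumes H: "0 < H" "H < 1"
  shows "(\<integral>\<^sup>+\<omega>. ennreal (fbm_weight H \<omega> * (1 - cos (\<omega> * x))) \<partial>lborel) = ennreal (\<bar>x\<bar> powr (2*H) * fbm_const H)"
proof (cases "x = 0")
  case False
  define c where "c = \<bar>x\<bar>"
  have c: "0 < c" using False by (simp add: c_def)
  let ?g = "\<lambda>\<omega>. ennreal (fbm_weight H \<omega> * (1 - cos (\<omega> * x)))"
  have scale: "fbm_weight H (c * \<omega>) * (1 - cos (c * \<omega>)) = c powr (-1-2*H) * (fbm_weight H \<omega> * (1 - cos (\<omega> * x)))" for \<omega>
  proof -
    have "cos (c * \<omega>) = cos (\<omega> * x)" by (cases "0 \<le> x") (auto simp: c_def mult.commute)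
    moreover have "fbm_weight H (c * \<omega>) = c powr (-1-2*H) * fbm_weight H \<omega>"
      using c by (cases "0 < \<omega>") (auto simp: fbm_weight_def powr_mult zero_less_mult_iff)
    ultimately show ?thesis by simp
  qed
  have "ennreal (fbm_const H) = ennreal c * (\<integral>\<^sup>+\<omega>. ennreal (fbm_weight H (c * \<omega>) * (1 - cos (c * \<omega>))) \<partial>lborel)"
    unfolding nn_integral_fbm_const[OF H, symmetric]
    using nn_integral_real_affine[of "\<lambda>v. ennreal (fbm_weight H v * (1 - cos v))" c 0] c by simp
  also have "\<dots> = ennreal c * (ennreal (c powr (-1-2*H)) * integral\<^sup>N lborel ?g)"
    unfolding scale using c by (simp add: ennreal_mult nn_integral_cmult)
  also have "\<dots> = ennreal (c powr (-2*H)) * integral\<^sup>N lborel ?g"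
    using c by (simp add: ennreal_mult[symmetric] mult.assoc[symmetric] powr_mult_base)
  finally have "ennreal (c powr (2*H)) * ennreal (fbm_const H) = ennreal (c powr (2*H) * c powr (-2*H)) * integral\<^sup>N lborel ?g"
    using c by (simp add: ennreal_mult mult.assoc)
  then show ?thesis using c fbm_const_pos[OF H] by (simp add: c_def powr_add[symmetric] ennreal_mult)
qed simp

lemma has_bochner_integral_fbm_weight_one_minus_cos:
  assumes "0 < H" "H < 1"
  shows "has_bochner_integral lborel (\<lambda>\<omega>. fbm_weight H \<omega> * (1 - cos (\<omega> * x))) (\<bar>x\<bar> powr (2*H) * fbm_const H)"
  using fbm_const_pos[OF assms] nn_integral_fbm_weight_one_minus_cos[OF assms]
  by (intro has_bochner_integral_nn_integral) auto

lemma cmod_sum_power2: "(cmod (\<Sum>k\<in>I. z k))\<^sup>2 = (\<Sum>k\<in>I. \<Sum>l\<in>I. Re (z k * cnj (z l)))"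
proof -
  have "(cmod (\<Sum>k\<in>I. z k))\<^sup>2 = Re ((\<Sum>k\<in>I. z k) * cnj (\<Sum>l\<in>I. z l))"
    by (metis Re_complex_of_real complex_norm_square)
  also have "\<dots> = (\<Sum>k\<in>I. \<Sum>l\<in>I. Re (z k * cnj (z l)))"
    by (simp only: cnj_sum sum_product Re_sum)
  finally show ?thesis .
qed

lemma Re_cis_minus_one_mult_cnj:
  "Re ((cis a - 1) * cnj (cis b - 1)) = (1 - cos a) + (1 - cos b) - (1 - cos (a - b))"
  by (simp add: cos_diff algebra_simps)

lemma has_bochner_integral_fbm_cov:
  fixes a t :: "'i \<Rightarrow> real"
  assumes H: "0 < H" "H < 1" and t: "\<And>k. k \<in> I \<Longrightarrow> 0 \<le> t k"
  shows "has_bochner_integral lborel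
     (\<lambda>\<omega>. fbm_weight H \<omega> * (cmod (\<Sum>k\<in>I. a k *\<^sub>R (cis (\<omega> * t k) - 1)))\<^sup>2)
     (2 * fbm_const H * (\<Sum>k\<in>I. \<Sum>l\<in>I. a k * a l * fbm_cov H (t k) (t l)))"
proof -
  let ?\<phi> = "\<lambda>x \<omega>. fbm_weight H \<omega> * (1 - cos (\<omega> * x))"
  have "has_bochner_integral lborel
      (\<lambda>\<omega>. \<Sum>k\<in>I. \<Sum>l\<in>I. a k * a l * (?\<phi> (t k) \<omega> + ?\<phi> (t l) \<omega> - ?\<phi> (t k - t l) \<omega>))
      (\<Sum>k\<in>I. \<Sum>l\<in>I. a k * a l * (\<bar>t k\<bar> powr (2*H) * fbm_const H + \<bar>t l\<bar> powr (2*H) * fbm_const H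
         - \<bar>t k - t l\<bar> powr (2*H) * fbm_const H))"
    by (intro has_bochner_integral_sum has_bochner_integral_mult_right has_bochner_integral_add
        has_bochner_integral_diff has_bochner_integral_fbm_weight_one_minus_cos H)
  moreover have "(\<Sum>k\<in>I. \<Sum>l\<in>I. a k * a l * (?\<phi> (t k) \<omega> + ?\<phi> (t l) \<omega> - ?\<phi> (t k - t l) \<omega>)) =
      fbm_weight H \<omega> * (cmod (\<Sum>k\<in>I. a k *\<^sub>R (cis (\<omega> * t k) - 1)))\<^sup>2" for \<omega>
    unfolding cmod_sum_power2 sum_distrib_left
    by (intro sum.cong refl) (simp add: scaleR_conv_of_real Re_cis_minus_one_mult_cnj right_diff_distrib cos_diff algebra_simps)
  moreover have "(\<Sum>k\<in>I. \<Sum>l\<in>I. a k * a l * (\<bar>t k\<bar> powr (2*H) * fbm_const H + \<bar>t l\<bar> powr (2*H) * fbm_const H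
         - \<bar>t k - t l\<bar> powr (2*H) * fbm_const H)) =
      2 * fbm_const H * (\<Sum>k\<in>I. \<Sum>l\<in>I. a k * a l * fbm_cov H (t k) (t l))"
    unfolding sum_distrib_left by (intro sum.cong refl) (simp add: fbm_cov_def t algebra_simps)
  ultimately show ?thesis by simp
qed

lemma centered_gaussian_process_second_moment_nat:
  fixes n :: nat
  assumes "prob_space M" and G: "centered_gaussian_process M S X R" and t: "\<And>k. k < n \<Longrightarrow> t k \<in> S"
  shows "(\<integral>\<^sup>+\<omega>. ennreal ((\<Sum>k<n. a k * X (t k) \<omega>)\<^sup>2) \<partial>M) =
    ennreal (\<Sum>k<n. \<Sum>l<n. a k * a l * R (t k) (t l))"
proof -
  interpret prob_space M by fact
  define v where "v = (\<Sum>k<n. \<Sum>l<n. a k * a l * R (t k) (t l))"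
  define Y where "Y = (\<lambda>\<omega>. \<Sum>k<n. a k * X (t k) \<omega>)"
  have gp: "(v > 0 \<longrightarrow> distributed M lborel Y (normal_density 0 (sqrt v))) \<and> (v \<le> 0 \<longrightarrow> (AE \<omega> in M. Y \<omega> = 0))"
    using conjunct2[OF G[unfolded centered_gaussian_process_def], rule_format, of n t a, OF t]
    unfolding Let_def v_def Y_def .
  show ?thesis
  proof (cases "v > 0")
    case True
    have moment: "has_bochner_integral lborel (\<lambda>x. normal_density 0 (sqrt v) x * (x - 0) ^ (2 * 1)) v"
      using normal_moment_even[of "sqrt v" 0 1] True by simp
    have "(\<integral>\<^sup>+\<omega>. ennreal ((Y \<omega>)\<^sup>2) \<partial>M) = (\<integral>\<^sup>+x. ennreal (normal_density 0 (sqrt v) x) * ennreal (x\<^sup>2) \<partial>lborel)"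
      using gp True by (intro distributed_nn_integral[symmetric]) auto
    also have "\<dots> = (\<integral>\<^sup>+x. ennreal (normal_density 0 (sqrt v) x * (x - 0) ^ (2 * 1)) \<partial>lborel)"
      by (intro nn_integral_cong) (simp add: ennreal_mult)
    also have "\<dots> = ennreal v"
      using nn_integral_eq_integral[OF integrable.intros[OF moment]] has_bochner_integral_integral_eq[OF moment]
      by simp
    finally show ?thesis unfolding Y_def v_def .
  next
    case False
    then have "(\<integral>\<^sup>+\<omega>. ennreal ((Y \<omega>)\<^sup>2) \<partial>M) = (\<integral>\<^sup>+\<omega>. 0 \<partial>M)"
      using gp by (intro nn_integral_cong_AE) auto
    then show ?thesis using False unfolding Y_def v_def by (simp add: ennreal_eq_0_iff)
  qed
qed

lemma centered_gaussian_process_second_moment: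
  fixes t a :: "'i \<Rightarrow> real"
  assumes "prob_space M" "centered_gaussian_process M S X R" "finite I" "\<And>k. k \<in> I \<Longrightarrow> t k \<in> S"
  shows "(\<integral>\<^sup>+\<omega>. ennreal ((\<Sum>k\<in>I. a k * X (t k) \<omega>)\<^sup>2) \<partial>M) =
    ennreal (\<Sum>k\<in>I. \<Sum>l\<in>I. a k * a l * R (t k) (t l))"
proof -
  obtain e where e: "bij_betw e {..<card I} I"
    using ex_bij_betw_nat_finite[OF assms(3)] by (auto simp: atLeast0LessThan)
  have "(\<Sum>k\<in>I. f k) = (\<Sum>k<card I. f (e k))" for f :: "'i \<Rightarrow> real"
    by (rule sum.reindex_bij_betw[OF e, symmetric])
  moreover have "k < card I \<Longrightarrow> (t \<circ> e) k \<in> S" for k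
    using e assms(4) by (auto simp: bij_betw_def)
  ultimately show ?thesis
    using centered_gaussian_process_second_moment_nat[OF assms(1,2), of "card I" "t \<circ> e" "a \<circ> e"] by simp
qed

lemma fbm_increments_second_moment:
  fixes a s r :: "'i \<Rightarrow> real"
  assumes M: "prob_space M" and G: "centered_gaussian_process M {0..} X (fbm_cov H)"
    and H: "0 < H" "H < 1" and I: "finite I"
    and s: "\<And>k. k \<in> I \<Longrightarrow> 0 \<le> s k" and r: "\<And>k. k \<in> I \<Longrightarrow> 0 \<le> r k"
  shows "(\<integral>\<^sup>+\<omega>. ennreal ((\<Sum>k\<in>I. a k * (X (s k) \<omega> - X (r k) \<omega>))\<^sup>2) \<partial>M) =
    ennreal (1 / (2 * fbm_const H)) * spectral_energy H (\<lambda>\<omega>. \<Sum>k\<in>I. a k *\<^sub>R (cis (\<omega> * s k) - cis (\<omega> * r k)))"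
proof -
  define t where "t = (\<lambda>(k, b). if b then s k else r k)"
  define c where "c = (\<lambda>(k, b). if b then a k else - a k)"
  define J where "J = I \<times> (UNIV :: bool set)"
  define Q where "Q = (\<Sum>k\<in>J. \<Sum>l\<in>J. c k * c l * fbm_cov H (t k) (t l))"
  have J: "finite J" "\<And>k. k \<in> J \<Longrightarrow> 0 \<le> t k" using I s r by (auto simp: J_def t_def)
  have process: "(\<Sum>k\<in>I. a k * (X (s k) \<omega> - X (r k) \<omega>)) = (\<Sum>k\<in>J. c k * X (t k) \<omega>)"
    and transform: "(\<Sum>k\<in>I. a k *\<^sub>R (cis (x * s k) - cis (x * r k))) = (\<Sum>k\<in>J. c k *\<^sub>R (cis (x * t k) - 1))"
    for \<omega> x
    by (simp_all add: J_def sum.cartesian_product' UNIV_bool c_def t_def algebra_simps sum_subtractf)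
  have moment: "(\<integral>\<^sup>+\<omega>. ennreal ((\<Sum>k\<in>J. c k * X (t k) \<omega>)\<^sup>2) \<partial>M) = ennreal Q"
    unfolding Q_def using J by (intro centered_gaussian_process_second_moment[OF M G]) auto
  have spectral: "has_bochner_integral lborel
      (\<lambda>\<omega>. fbm_weight H \<omega> * (cmod (\<Sum>k\<in>J. c k *\<^sub>R (cis (\<omega> * t k) - 1)))\<^sup>2) (2 * fbm_const H * Q)"
    unfolding Q_def using J by (intro has_bochner_integral_fbm_cov H)
  have "spectral_energy H (\<lambda>\<omega>. \<Sum>k\<in>J. c k *\<^sub>R (cis (\<omega> * t k) - 1)) = ennreal (2 * fbm_const H * Q)"
    unfolding spectral_energy_def
    using nn_integral_eq_integral[OF integrable.intros[OF spectral]] has_bochner_integral_integral_eq[OF spectral]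
    by simp
  then show ?thesis
    using fbm_const_pos[OF H] unfolding process transform moment
    by (simp add: ennreal_mult'[symmetric])
qed

section \<open>The error functional and its Fourier transform\<close>

text \<open>One eigenmode of the error: for \<open>f = (\<lambda>s. \<xi>\<^sub>i s \<omega>)\<close> and \<open>\<mu> = \<lambda>\<^sub>i powr (\<alpha>/2)\<close> this is the
  \<open>i\<close>-th coordinate of \<open>\<Sum>\<^sub>j \<integral> \<C>(t\<^sub>n - s) (B(s) - B(t\<^sub>j)) ds\<close>, integrated over \<open>[t\<^sub>j, t\<^sub>j + \<tau>]\<close>; for
  \<open>f = (\<lambda>s. cis (\<omega> * s))\<close> it is the Fourier transform whose weighted energy bounds its second moment.\<close>
definition error_functional :: "nat \<Rightarrow> real \<Rightarrow> real \<Rightarrow> (real \<Rightarrow> 'a::real_normed_vector) \<Rightarrow> 'a" where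
  "error_functional n \<tau> \<mu> f = (\<Sum>j<n. integral {real j * \<tau> .. real (Suc j) * \<tau>}
      (\<lambda>s. cos (\<mu> * (real n * \<tau> - s)) *\<^sub>R (f s - f (real j * \<tau>))))"

definition riemann_node :: "real \<Rightarrow> nat \<Rightarrow> nat \<Rightarrow> nat \<Rightarrow> real" where
  "riemann_node \<tau> m j p = real j * \<tau> + real p * (\<tau> / real m)"

definition error_riemann_sum :: "nat \<Rightarrow> real \<Rightarrow> real \<Rightarrow> nat \<Rightarrow> (real \<Rightarrow> 'a::real_normed_vector) \<Rightarrow> 'a" where
  "error_riemann_sum n \<tau> \<mu> m f = (\<Sum>j<n. \<Sum>p<m. ((\<tau> / real m) * cos (\<mu> * (real n * \<tau> - riemann_node \<tau> m j p)))
      *\<^sub>R (f (riemann_node \<tau> m j p) - f (real j * \<tau>)))"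

lemma riemann_node_nonneg: "0 \<le> \<tau> \<Longrightarrow> 0 \<le> riemann_node \<tau> m j p"
  by (simp add: riemann_node_def)

lemma error_riemann_sum_tendsto:
  fixes f :: "real \<Rightarrow> 'a::euclidean_space"
  assumes f: "continuous_on {0..} f" and \<tau>: "0 \<le> \<tau>"
  shows "(\<lambda>m. error_riemann_sum n \<tau> \<mu> m f) \<longlonglongrightarrow> error_functional n \<tau> \<mu> f"
  unfolding error_riemann_sum_def error_functional_def
proof (intro tendsto_sum)
  fix j
  let ?g = "\<lambda>s. cos (\<mu> * (real n * \<tau> - s)) *\<^sub>R (f s - f (real j * \<tau>))"
  have "continuous_on {real j * \<tau>..real j * \<tau> + \<tau>} ?g"
    using \<tau> by (intro continuous_intros continuous_on_subset[OF f]) auto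
  from riemann_sum_tendsto[OF this \<tau>]
  show "(\<lambda>m. \<Sum>p<m. ((\<tau> / real m) * cos (\<mu> * (real n * \<tau> - riemann_node \<tau> m j p)))
      *\<^sub>R (f (riemann_node \<tau> m j p) - f (real j * \<tau>))) \<longlonglongrightarrow> integral {real j * \<tau>..real (Suc j) * \<tau>} ?g"
    by (simp add: riemann_node_def algebra_simps)
qed

lemma norm_error_riemann_sum_cis_le:
  assumes \<tau>: "0 \<le> \<tau>"
  shows "cmod (error_riemann_sum n \<tau> \<mu> m (\<lambda>s. cis (\<omega> * s))) \<le> real n * \<tau> * min (\<bar>\<omega>\<bar> * \<tau>) 2"
proof (cases "m = 0")
  case False
  have "cmod (((\<tau> / real m) * cos (\<mu> * (real n * \<tau> - riemann_node \<tau> m j p)))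
      *\<^sub>R (cis (\<omega> * riemann_node \<tau> m j p) - cis (\<omega> * (real j * \<tau>)))) \<le> \<tau> / real m * min (\<bar>\<omega>\<bar> * \<tau>) 2"
    if "p < m" for j p
  proof -
    have "\<bar>\<omega> * riemann_node \<tau> m j p - \<omega> * (real j * \<tau>)\<bar> = \<bar>\<omega>\<bar> * (real p * (\<tau> / real m))"
      using \<tau> by (simp add: riemann_node_def algebra_simps abs_mult)
    also have "\<dots> \<le> \<bar>\<omega>\<bar> * \<tau>"
      using that \<tau> by (intro mult_left_mono) (auto simp: field_simps mult_left_mono)
    finally have "\<bar>\<omega> * riemann_node \<tau> m j p - \<omega> * (real j * \<tau>)\<bar> \<le> \<bar>\<omega>\<bar> * \<tau>" .
    then have cis_le: "cmod (cis (\<omega> * riemann_node \<tau> m j p) - cis (\<omega> * (real j * \<tau>))) \<le> min (\<bar>\<omega>\<bar> * \<tau>) 2"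
      using norm_cis_diff_le order_trans norm_cis_diff_le_2 by (metis min.bounded_iff)
    have coeff_le: "\<bar>\<tau> / real m * cos (\<mu> * (real n * \<tau> - riemann_node \<tau> m j p))\<bar> \<le> \<tau> / real m"
      using \<tau> by (simp add: abs_mult divide_right_mono mult_left_le)
    show ?thesis unfolding norm_scaleR by (rule mult_mono[OF coeff_le cis_le]) (use \<tau> in auto)
  qed
  then have "cmod (error_riemann_sum n \<tau> \<mu> m (\<lambda>s. cis (\<omega> * s))) \<le> (\<Sum>j<n. \<Sum>p<m. \<tau> / real m * min (\<bar>\<omega>\<bar> * \<tau>) 2)"
    unfolding error_riemann_sum_def by (intro order_trans[OF norm_sum] sum_mono order_trans[OF norm_sum]) auto
  then show ?thesis using False by simp
qed (use \<tau> in \<open>simp add: error_riemann_sum_def\<close>)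

lemma measurable_error_riemann_sum_cis [measurable]:
  "(\<lambda>\<omega>. error_riemann_sum n \<tau> \<mu> m (\<lambda>s. cis (\<omega> * s))) \<in> borel_measurable borel"
  unfolding error_riemann_sum_def by (intro borel_measurable_continuous_onI continuous_intros)

lemma measurable_error_functional_cis:
  "0 \<le> \<tau> \<Longrightarrow> (\<lambda>\<omega>. error_functional n \<tau> \<mu> (\<lambda>s. cis (\<omega> * s))) \<in> borel_measurable borel"
  by (rule borel_measurable_LIMSEQ_metric[OF measurable_error_riemann_sum_cis error_riemann_sum_tendsto])
    (auto intro!: continuous_intros)

lemma norm_error_riemann_sum_cis_power2_le:
  assumes "0 \<le> \<tau>"
  shows "(cmod (error_riemann_sum n \<tau> \<mu> m (\<lambda>s. cis (\<omega> * s))))\<^sup>2 \<le> (real n * \<tau>)\<^sup>2 * max (\<tau>\<^sup>2) 4 * min (\<omega>\<^sup>2) 1"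
proof -
  have "(cmod (error_riemann_sum n \<tau> \<mu> m (\<lambda>s. cis (\<omega> * s))))\<^sup>2 \<le> (real n * \<tau>)\<^sup>2 * (min (\<bar>\<omega>\<bar> * \<tau>) 2)\<^sup>2"
    using norm_error_riemann_sum_cis_le[OF assms] by (simp add: power_mult_distrib[symmetric] power_mono)
  also have "(min (\<bar>\<omega>\<bar> * \<tau>) 2)\<^sup>2 \<le> max (\<tau>\<^sup>2) 4 * min (\<omega>\<^sup>2) 1"
  proof (cases "\<omega>\<^sup>2 \<le> 1")
    case True
    have "(min (\<bar>\<omega>\<bar> * \<tau>) 2)\<^sup>2 \<le> (\<bar>\<omega>\<bar> * \<tau>)\<^sup>2" using assms by (intro power_mono) auto
    also have "\<dots> = \<tau>\<^sup>2 * \<omega>\<^sup>2" by (simp add: power_mult_distrib)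
    also have "\<dots> \<le> max (\<tau>\<^sup>2) 4 * \<omega>\<^sup>2" by (intro mult_right_mono) auto
    finally show ?thesis using True by (simp add: min_def)
  next
    case False
    have "(min (\<bar>\<omega>\<bar> * \<tau>) 2)\<^sup>2 \<le> 2\<^sup>2" using assms by (intro power_mono) auto
    then show ?thesis using False by (simp add: min_def)
  qed
  finally show ?thesis by (simp add: mult_left_mono mult.assoc)
qed

lemma spectral_energy_error_riemann_sum_tendsto:
  assumes H: "0 < H" "H < 1" and \<tau>: "0 \<le> \<tau>"
  shows "(\<lambda>m. spectral_energy H (\<lambda>\<omega>. error_riemann_sum n \<tau> \<mu> m (\<lambda>s. cis (\<omega> * s))))
    \<longlonglongrightarrow> spectral_energy H (\<lambda>\<omega>. error_functional n \<tau> \<mu> (\<lambda>s. cis (\<omega> * s)))"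
  unfolding spectral_energy_def
proof (rule nn_integral_dominated_convergence)
  define C where "C = (real n * \<tau>)\<^sup>2 * max (\<tau>\<^sup>2) 4"
  show "(\<integral>\<^sup>+\<omega>. ennreal (fbm_weight H \<omega> * (C * min (\<omega>\<^sup>2) 1)) \<partial>lborel) < \<infinity>"
    using H by (intro nn_integral_fbm_weight_finite[where C=C]) (auto simp: C_def)
  show "AE \<omega> in lborel. ennreal (fbm_weight H \<omega> * (cmod (error_riemann_sum n \<tau> \<mu> m (\<lambda>s. cis (\<omega> * s))))\<^sup>2)
      \<le> ennreal (fbm_weight H \<omega> * (C * min (\<omega>\<^sup>2) 1))" for m
    unfolding C_def
    by (intro AE_I2 ennreal_leI mult_left_mono[OF _ fbm_weight_nonneg] norm_error_riemann_sum_cis_power2_le \<tau>)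
  show "AE \<omega> in lborel. (\<lambda>m. ennreal (fbm_weight H \<omega> * (cmod (error_riemann_sum n \<tau> \<mu> m (\<lambda>s. cis (\<omega> * s))))\<^sup>2))
      \<longlonglongrightarrow> ennreal (fbm_weight H \<omega> * (cmod (error_functional n \<tau> \<mu> (\<lambda>s. cis (\<omega> * s))))\<^sup>2)"
    using \<tau> by (intro AE_I2 tendsto_intros error_riemann_sum_tendsto continuous_intros)
qed (use measurable_error_functional_cis[OF \<tau>] in measurable)

lemma error_riemann_sum_eq_sum_increments:
  "error_riemann_sum n \<tau> \<mu> m f = (\<Sum>(j, p)\<in>{..<n} \<times> {..<m}.
     ((\<tau> / real m) * cos (\<mu> * (real n * \<tau> - riemann_node \<tau> m j p)))
       *\<^sub>R (f (riemann_node \<tau> m j p) - f (real j * \<tau>)))"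
  by (simp add: error_riemann_sum_def sum.cartesian_product)

lemma fbm_error_functional_measurable:
  assumes X: "is_fbm M H X" and \<tau>: "0 \<le> \<tau>"
  shows "(\<lambda>\<omega>. error_riemann_sum n \<tau> \<mu> m (\<lambda>s. X s \<omega>)) \<in> borel_measurable M"
    and "(\<lambda>\<omega>. error_functional n \<tau> \<mu> (\<lambda>s. X s \<omega>)) \<in> borel_measurable M"
proof -
  have Xm: "X t \<in> borel_measurable M" if "0 \<le> t" for t
    using X that unfolding is_fbm_def centered_gaussian_process_def by auto
  show riemann: "(\<lambda>\<omega>. error_riemann_sum n \<tau> \<mu> m (\<lambda>s. X s \<omega>)) \<in> borel_measurable M" for m
    unfolding error_riemann_sum_def using \<tau>
    by (intro borel_measurable_sum borel_measurable_scaleR borel_measurable_diff borel_measurable_const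
        Xm riemann_node_nonneg) auto
  show "(\<lambda>\<omega>. error_functional n \<tau> \<mu> (\<lambda>s. X s \<omega>)) \<in> borel_measurable M"
    using X \<tau> unfolding is_fbm_def
    by (intro borel_measurable_LIMSEQ_real[OF error_riemann_sum_tendsto riemann]) auto
qed

text \<open>Riemann sums are finite combinations of increments, for which equality holds; Fatou's lemma passes to the limit.\<close>
lemma fbm_error_second_moment_le_spectral_energy:
  assumes M: "prob_space M" and X: "is_fbm M H X" and H: "0 < H" "H < 1" and \<tau>: "0 \<le> \<tau>"
  shows "(\<integral>\<^sup>+\<omega>. ennreal ((error_functional n \<tau> \<mu> (\<lambda>s. X s \<omega>))\<^sup>2) \<partial>M)
    \<le> ennreal (1 / (2 * fbm_const H)) * spectral_energy H (\<lambda>\<omega>. error_functional n \<tau> \<mu> (\<lambda>s. cis (\<omega> * s)))"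
proof (rule nn_integral_le_of_tendsto)
  let ?R = "\<lambda>m \<omega>. error_riemann_sum n \<tau> \<mu> m (\<lambda>s. X s \<omega>)"
  have G: "centered_gaussian_process M {0..} X (fbm_cov H)"
    and paths: "\<And>\<omega>. \<omega> \<in> space M \<Longrightarrow> continuous_on {0..} (\<lambda>t. X t \<omega>)"
    using X unfolding is_fbm_def by auto
  show "(\<lambda>m. ennreal ((?R m \<omega>)\<^sup>2)) \<longlonglongrightarrow> ennreal ((error_functional n \<tau> \<mu> (\<lambda>s. X s \<omega>))\<^sup>2)"
    if "\<omega> \<in> space M" for \<omega>
    using error_riemann_sum_tendsto[OF paths[OF that] \<tau>] by (intro tendsto_intros)
  show "(\<lambda>\<omega>. ennreal ((?R m \<omega>)\<^sup>2)) \<in> borel_measurable M" for m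
    using fbm_error_functional_measurable(1)[OF X \<tau>] by measurable
  have "(\<integral>\<^sup>+\<omega>. ennreal ((?R m \<omega>)\<^sup>2) \<partial>M) =
      ennreal (1 / (2 * fbm_const H)) * spectral_energy H (\<lambda>\<omega>. error_riemann_sum n \<tau> \<mu> m (\<lambda>s. cis (\<omega> * s)))"
    for m
    unfolding error_riemann_sum_eq_sum_increments case_prod_beta real_scaleR_def
    using \<tau> by (intro fbm_increments_second_moment[OF M G H]) (auto intro: riemann_node_nonneg)
  then show "(\<lambda>m. \<integral>\<^sup>+\<omega>. ennreal ((?R m \<omega>)\<^sup>2) \<partial>M) \<longlonglongrightarrow>
      ennreal (1 / (2 * fbm_const H)) * spectral_energy H (\<lambda>\<omega>. error_functional n \<tau> \<mu> (\<lambda>s. cis (\<omega> * s)))"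
    using spectral_energy_error_riemann_sum_tendsto[OF H \<tau>] by (simp add: ennreal_tendsto_cmult)
qed

lemma error_riemann_sum_rescale:
  "error_riemann_sum n \<tau> \<mu> m f = \<tau> *\<^sub>R error_riemann_sum n 1 (\<mu> * \<tau>) m (\<lambda>s. f (\<tau> * s))"
proof -
  have "riemann_node \<tau> m j p = \<tau> * riemann_node 1 m j p" for j p
    by (simp add: riemann_node_def algebra_simps)
  then show ?thesis
    unfolding error_riemann_sum_def scaleR_sum_right
    by (intro sum.cong refl) (simp add: algebra_simps)
qed

lemma error_functional_rescale:
  fixes f :: "real \<Rightarrow> 'a::euclidean_space"
  assumes f: "continuous_on {0..} f" and \<tau>: "0 < \<tau>"
  shows "error_functional n \<tau> \<mu> f = \<tau> *\<^sub>R error_functional n 1 (\<mu> * \<tau>) (\<lambda>s. f (\<tau> * s))"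
proof (rule LIMSEQ_unique)
  show "(\<lambda>m. error_riemann_sum n \<tau> \<mu> m f) \<longlonglongrightarrow> error_functional n \<tau> \<mu> f"
    using error_riemann_sum_tendsto[OF f] \<tau> by simp
  have "continuous_on {0..} (\<lambda>s. f (\<tau> * s))"
    using \<tau> by (intro continuous_on_compose2[OF f] continuous_intros) (auto simp: zero_le_mult_iff)
  then show "(\<lambda>m. error_riemann_sum n \<tau> \<mu> m f) \<longlonglongrightarrow> \<tau> *\<^sub>R error_functional n 1 (\<mu> * \<tau>) (\<lambda>s. f (\<tau> * s))"
    unfolding error_riemann_sum_rescale[of n \<tau>] by (intro tendsto_intros error_riemann_sum_tendsto) auto
qed

lemma spectral_energy_rescale:
  assumes g[measurable]: "g \<in> borel_measurable borel" and \<tau>: "0 < \<tau>"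
  shows "spectral_energy H (\<lambda>\<omega>. \<tau> *\<^sub>R g (\<omega> * \<tau>)) = ennreal (\<tau> powr (2 + 2*H)) * spectral_energy H g"
proof -
  let ?G = "\<lambda>\<omega>. ennreal (fbm_weight H \<omega> * (cmod (g (\<omega> * \<tau>)))\<^sup>2)"
  have weight: "fbm_weight H (\<omega> * \<tau>) = \<tau> powr (-1-2*H) * fbm_weight H \<omega>" for \<omega>
    using \<tau> by (cases "0 < \<omega>") (auto simp: fbm_weight_def powr_mult zero_less_mult_iff)
  have "spectral_energy H g = ennreal \<tau> * (\<integral>\<^sup>+\<omega>. ennreal (fbm_weight H (\<tau> * \<omega>) * (cmod (g (\<tau> * \<omega>)))\<^sup>2) \<partial>lborel)"
    unfolding spectral_energy_def
    using nn_integral_real_affine[of "\<lambda>u. ennreal (fbm_weight H u * (cmod (g u))\<^sup>2)" \<tau> 0] \<tau> by simp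
  also have "\<dots> = ennreal \<tau> * (ennreal (\<tau> powr (-1-2*H)) * integral\<^sup>N lborel ?G)"
    using \<tau> by (simp add: weight mult.commute[of \<tau>] ennreal_mult mult.assoc nn_integral_cmult)
  also have "\<dots> = ennreal (\<tau> * \<tau> powr (-1-2*H)) * integral\<^sup>N lborel ?G"
    using \<tau> by (simp add: ennreal_mult mult.assoc)
  finally have "ennreal (\<tau> powr (2 + 2*H)) * spectral_energy H g
      = ennreal (\<tau> powr (2 + 2*H) * (\<tau> * \<tau> powr (-1-2*H))) * integral\<^sup>N lborel ?G"
    using \<tau> by (simp add: ennreal_mult mult.assoc)
  also have "\<tau> powr (2 + 2*H) * (\<tau> * \<tau> powr (-1-2*H)) = \<tau>\<^sup>2"
    using \<tau> by (simp add: powr_add[symmetric] powr_mult_base flip: powr_numeral)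
  also have "ennreal (\<tau>\<^sup>2) * integral\<^sup>N lborel ?G = spectral_energy H (\<lambda>\<omega>. \<tau> *\<^sub>R g (\<omega> * \<tau>))"
    unfolding spectral_energy_def using \<tau>
    by (simp add: nn_integral_cmult[symmetric] ennreal_mult[symmetric] power_mult_distrib mult_ac)
  finally show ?thesis ..
qed

definition cis_integral :: "real \<Rightarrow> real \<Rightarrow> complex" where
  "cis_integral h x = (if x = 0 then complex_of_real h else (cis (x * h) - 1) / (\<i> * complex_of_real x))"

lemma measurable_cis_integral [measurable]:
  assumes [measurable]: "f \<in> borel_measurable borel"
  shows "(\<lambda>x. cis_integral h (f x)) \<in> borel_measurable borel"
proof -
  have [measurable]: "cis \<in> borel_measurable borel"
    by (intro borel_measurable_continuous_onI continuous_intros)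
  show ?thesis unfolding cis_integral_def by measurable
qed

lemma has_integral_cis:
  assumes "0 \<le> h"
  shows "((\<lambda>s. cis (x * s)) has_integral cis (x * c) * cis_integral h x) {c..c + h}"
proof (cases "x = 0")
  case True
  then show ?thesis using has_integral_const_real[of "1::complex" c "c + h"] assms
    by (simp add: cis_integral_def scaleR_conv_of_real)
next
  case False
  have "((\<lambda>s. cis (x * s) / (\<i> * complex_of_real x)) has_vector_derivative cis (x * s)) (at s within S)" for s S
    using False by (auto intro!: derivative_eq_intros simp: has_real_derivative_iff_has_vector_derivative[symmetric]
        has_vector_derivative_def scaleR_conv_of_real field_simps)
  then have "((\<lambda>s. cis (x * s)) has_integral
      (cis (x * (c + h)) / (\<i> * complex_of_real x) - cis (x * c) / (\<i> * complex_of_real x))) {c..c + h}"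
    using assms by (intro fundamental_theorem_of_calculus) auto
  then show ?thesis
    using False by (simp add: cis_integral_def distrib_left cis_mult[symmetric] field_simps)
qed

lemma norm_cis_integral_le: "0 \<le> h \<Longrightarrow> cmod (cis_integral h x) \<le> h"
  using has_integral_bound[of 1 "\<lambda>s. cis (x * s)" "cis_integral h x" 0 h] has_integral_cis[of h x 0]
  by simp

lemma norm_cis_integral_le_inverse: "x \<noteq> 0 \<Longrightarrow> cmod (cis_integral h x) \<le> 2 / \<bar>x\<bar>"
  using norm_cis_diff_le_2[of "x * h" 0]
  by (simp add: cis_integral_def norm_divide norm_mult divide_right_mono)

definition dirichlet_sum :: "nat \<Rightarrow> real \<Rightarrow> complex" where
  "dirichlet_sum n x = (\<Sum>j<n. cis (x * real j))"

definition increment_transform :: "real \<Rightarrow> real \<Rightarrow> complex" where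
  "increment_transform \<nu> \<omega> = cis_integral 1 (\<omega> - \<nu>) - cis_integral 1 (- \<nu>)"

definition block_transform :: "nat \<Rightarrow> real \<Rightarrow> real \<Rightarrow> complex" where
  "block_transform n \<nu> \<omega> = dirichlet_sum n (\<omega> - \<nu>) * increment_transform \<nu> \<omega>"

lemma measurable_dirichlet_sum [measurable]:
  assumes "f \<in> borel_measurable borel"
  shows "(\<lambda>x. dirichlet_sum n (f x)) \<in> borel_measurable borel"
proof -
  have "dirichlet_sum n \<in> borel_measurable borel"
    unfolding dirichlet_sum_def by (intro borel_measurable_continuous_onI continuous_intros)
  from measurable_compose[OF assms this] show ?thesis by (simp add: comp_def)
qed

lemma measurable_block_transform [measurable]: "block_transform n \<nu> \<in> borel_measurable borel"
  unfolding block_transform_def increment_transform_def by measurable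

lemma has_integral_cis_increment:
  "((\<lambda>s. cis (\<nu> * (t - s)) * (cis (\<omega> * s) - cis (\<omega> * c))) has_integral
    cis (\<nu> * t) * cis ((\<omega> - \<nu>) * c) * increment_transform \<nu> \<omega>) {c..c + 1}"
proof -
  have integrand: "cis (\<nu> * (t - s)) * (cis (\<omega> * s) - cis (\<omega> * c)) =
      cis (\<nu> * t) * (cis ((\<omega> - \<nu>) * s) - cis (\<omega> * c) * cis ((- \<nu>) * s))" for s
    by (simp add: cis_mult algebra_simps)
  have "cis (\<omega> * c) * cis ((- \<nu>) * c) = cis ((\<omega> - \<nu>) * c)"
    by (simp add: cis_mult left_diff_distrib)
  then have integral_eq: "cis (\<nu> * t) * (cis ((\<omega> - \<nu>) * c) * cis_integral 1 (\<omega> - \<nu>)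
        - cis (\<omega> * c) * (cis ((- \<nu>) * c) * cis_integral 1 (- \<nu>)))
      = cis (\<nu> * t) * cis ((\<omega> - \<nu>) * c) * increment_transform \<nu> \<omega>"
    unfolding mult.assoc[symmetric] by (simp add: increment_transform_def algebra_simps)
  have "((\<lambda>s. cis (\<nu> * t) * (cis ((\<omega> - \<nu>) * s) - cis (\<omega> * c) * cis ((- \<nu>) * s))) has_integral
      cis (\<nu> * t) * (cis ((\<omega> - \<nu>) * c) * cis_integral 1 (\<omega> - \<nu>)
        - cis (\<omega> * c) * (cis ((- \<nu>) * c) * cis_integral 1 (- \<nu>)))) {c..c + 1}"
    by (intro has_integral_mult_right has_integral_diff has_integral_cis) simp_all
  then show ?thesis unfolding integrand integral_eq .
qed

lemma error_functional_cis_unit: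
  "error_functional n 1 \<nu> (\<lambda>s. cis (\<omega> * s)) =
    (cis (\<nu> * real n) * block_transform n \<nu> \<omega> + cis (- \<nu> * real n) * block_transform n (- \<nu>) \<omega>) / 2"
proof -
  have cos: "cos (\<nu> * (real n - s)) *\<^sub>R z = (cis (\<nu> * (real n - s)) * z + cis (- \<nu> * (real n - s)) * z) / 2"
    for s z
  proof -
    have "complex_of_real (cos (\<nu> * (real n - s))) = (cis (\<nu> * (real n - s)) + cis (- \<nu> * (real n - s))) / 2"
      by (simp add: complex_eq_iff)
    then show ?thesis by (simp add: scaleR_conv_of_real field_simps)
  qed
  have "error_functional n 1 \<nu> (\<lambda>s. cis (\<omega> * s)) = (\<Sum>j<n. integral {real j..real j + 1}
      (\<lambda>s. cos (\<nu> * (real n - s)) *\<^sub>R (cis (\<omega> * s) - cis (\<omega> * real j))))"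
    by (simp add: error_functional_def add.commute)
  also have "\<dots> = (\<Sum>j<n.
      (cis (\<nu> * real n) * cis ((\<omega> - \<nu>) * real j) * increment_transform \<nu> \<omega>
       + cis (- \<nu> * real n) * cis ((\<omega> - - \<nu>) * real j) * increment_transform (- \<nu>) \<omega>) / 2)"
    unfolding cos by (intro sum.cong refl integral_unique has_integral_divide has_integral_add has_integral_cis_increment)
  also have "\<dots> = (cis (\<nu> * real n) * block_transform n \<nu> \<omega> + cis (- \<nu> * real n) * block_transform n (- \<nu>) \<omega>) / 2"
    by (simp add: block_transform_def dirichlet_sum_def sum_divide_distrib[symmetric] sum.distrib
        sum_distrib_left sum_distrib_right mult_ac)
  finally show ?thesis .
qed

lemma norm_error_functional_unit_power2_le:
  "(cmod (error_functional n 1 \<nu> (\<lambda>s. cis (\<omega> * s))))\<^sup>2 \<le>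
    (cmod (block_transform n \<nu> \<omega>))\<^sup>2 + (cmod (block_transform n (- \<nu>) \<omega>))\<^sup>2"
proof -
  have "(cmod (error_functional n 1 \<nu> (\<lambda>s. cis (\<omega> * s))))\<^sup>2 =
      (cmod (cis (\<nu> * real n) * block_transform n \<nu> \<omega> + cis (- \<nu> * real n) * block_transform n (- \<nu>) \<omega>))\<^sup>2 / 4"
    unfolding error_functional_cis_unit by (simp add: norm_divide power_divide)
  also have "\<dots> \<le> (2 * (cmod (block_transform n \<nu> \<omega>))\<^sup>2 + 2 * (cmod (block_transform n (- \<nu>) \<omega>))\<^sup>2) / 4"
    using norm_add_power2_le[of "cis (\<nu> * real n) * block_transform n \<nu> \<omega>" "cis (- \<nu> * real n) * block_transform n (- \<nu>) \<omega>"]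
    by (simp add: norm_mult divide_right_mono)
  also have "\<dots> \<le> (cmod (block_transform n \<nu> \<omega>))\<^sup>2 + (cmod (block_transform n (- \<nu>) \<omega>))\<^sup>2" by simp
  finally show ?thesis .
qed

lemma spectral_energy_error_functional_unit_le:
  "spectral_energy H (\<lambda>\<omega>. error_functional n 1 \<nu> (\<lambda>s. cis (\<omega> * s))) \<le>
    spectral_energy H (block_transform n \<nu>) + spectral_energy H (block_transform n (- \<nu>))"
proof -
  have "spectral_energy H (\<lambda>\<omega>. error_functional n 1 \<nu> (\<lambda>s. cis (\<omega> * s))) \<le>
      (\<integral>\<^sup>+\<omega>. ennreal (fbm_weight H \<omega> * (cmod (block_transform n \<nu> \<omega>))\<^sup>2)
        + ennreal (fbm_weight H \<omega> * (cmod (block_transform n (- \<nu>) \<omega>))\<^sup>2) \<partial>lborel)"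
    unfolding spectral_energy_def
    by (intro nn_integral_mono) (simp add: ennreal_plus[symmetric] ring_distribs[symmetric] mult_left_mono
        norm_error_functional_unit_power2_le del: ennreal_plus)
  then show ?thesis by (simp add: spectral_energy_def nn_integral_add)
qed

section \<open>Weighted energy of the Fourier transform\<close>

lemma norm_increment_transform_le_2: "cmod (increment_transform \<nu> \<omega>) \<le> 2"
  unfolding increment_transform_def
  using norm_triangle_ineq4[of "cis_integral 1 (\<omega> - \<nu>)" "cis_integral 1 (- \<nu>)"]
    norm_cis_integral_le[of 1 "\<omega> - \<nu>"] norm_cis_integral_le[of 1 "- \<nu>"] by simp

lemma norm_increment_transform_le_abs: "cmod (increment_transform \<nu> \<omega>) \<le> \<bar>\<omega>\<bar>"
proof -
  have hi: "((\<lambda>s. cis ((\<omega> - \<nu>) * s) - cis ((- \<nu>) * s)) has_integral increment_transform \<nu> \<omega>) (cbox 0 1)"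
    using has_integral_diff[OF has_integral_cis[of 1 "\<omega> - \<nu>" 0] has_integral_cis[of 1 "- \<nu>" 0]]
    by (simp add: increment_transform_def)
  have "cmod (cis ((\<omega> - \<nu>) * s) - cis ((- \<nu>) * s)) \<le> \<bar>\<omega>\<bar>" if "s \<in> cbox 0 1" for s
  proof -
    have "\<bar>(\<omega> - \<nu>) * s - (- \<nu>) * s\<bar> \<le> \<bar>\<omega>\<bar>"
      using that by (simp add: algebra_simps abs_mult mult_left_le_one_le)
    then show ?thesis using norm_cis_diff_le[of "(\<omega> - \<nu>) * s" "(- \<nu>) * s"] by linarith
  qed
  from has_integral_bound[OF _ hi this] show ?thesis by simp
qed

lemma increment_transform_eq:
  assumes "\<nu> \<noteq> 0"
  shows "increment_transform \<nu> \<omega> =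
    (cis (\<omega> - \<nu>) - cis (- \<nu>)) / (- \<i> * complex_of_real \<nu>) + complex_of_real (\<omega> / \<nu>) * cis_integral 1 (\<omega> - \<nu>)"
proof (cases "\<omega> = \<nu>")
  case False
  then have "complex_of_real \<omega> - complex_of_real \<nu> \<noteq> 0" by (metis of_real_diff of_real_eq_0_iff right_minus_eq)
  then show ?thesis using assms False by (simp add: increment_transform_def cis_integral_def field_simps)
qed (use assms in \<open>simp add: increment_transform_def cis_integral_def field_simps\<close>)

lemma norm_increment_transform_le_ratio:
  assumes "\<nu> \<noteq> 0"
  shows "cmod (increment_transform \<nu> \<omega>) \<le> 2 * \<bar>\<omega>\<bar> / \<bar>\<nu>\<bar>"
proof -
  have "cmod ((cis (\<omega> - \<nu>) - cis (- \<nu>)) / (- \<i> * complex_of_real \<nu>)) \<le> \<bar>\<omega>\<bar> / \<bar>\<nu>\<bar>"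
    using norm_cis_diff_le[of "\<omega> - \<nu>" "- \<nu>"] by (simp add: norm_divide norm_mult divide_right_mono)
  moreover have "cmod (complex_of_real (\<omega> / \<nu>) * cis_integral 1 (\<omega> - \<nu>)) \<le> \<bar>\<omega>\<bar> / \<bar>\<nu>\<bar>"
    using norm_cis_integral_le[of 1 "\<omega> - \<nu>"]
    by (simp add: norm_mult norm_divide divide_right_mono mult_left_le)
  ultimately show ?thesis
    unfolding increment_transform_eq[OF assms]
    using norm_triangle_ineq[of "(cis (\<omega> - \<nu>) - cis (- \<nu>)) / (- \<i> * complex_of_real \<nu>)"
        "complex_of_real (\<omega> / \<nu>) * cis_integral 1 (\<omega> - \<nu>)"] by linarith
qed

lemma dirichlet_sum_mult_cis_integral: "dirichlet_sum n x * cis_integral 1 x = cis_integral (real n) x"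
proof (cases "x = 0")
  case False
  have "dirichlet_sum n x * (cis x - 1) = (\<Sum>j<n. cis (x * real (Suc j)) - cis (x * real j))"
    unfolding dirichlet_sum_def sum_distrib_right by (intro sum.cong refl) (simp add: algebra_simps cis_mult)
  also have "\<dots> = cis (x * real n) - 1" by (subst sum_lessThan_telescope) simp
  finally show ?thesis using False by (simp add: cis_integral_def)
qed (simp add: dirichlet_sum_def cis_integral_def)

lemma block_transform_eq:
  "block_transform n \<nu> \<omega> = cis_integral (real n) (\<omega> - \<nu>) - dirichlet_sum n (\<omega> - \<nu>) * cis_integral 1 (- \<nu>)"
  by (simp add: block_transform_def increment_transform_def right_diff_distrib dirichlet_sum_mult_cis_integral)

lemma cmod_dirichlet_sum_power2: "(cmod (dirichlet_sum n x))\<^sup>2 = (\<Sum>j<n. \<Sum>k<n. cos (x * (real j - real k)))"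
  unfolding dirichlet_sum_def cmod_sum_power2 by (simp add: cos_diff right_diff_distrib)

lemma has_integral_cos_period:
  fixes j k :: nat
  shows "((\<lambda>\<omega>. cos ((\<omega> - \<nu>) * (real j - real k))) has_integral (if j = k then 2 * pi else 0)) {c..c + 2 * pi}"
proof (cases "j = k")
  case False
  define m where "m = real j - real k"
  have m: "m \<noteq> 0" using False by (simp add: m_def)
  define F where "F \<omega> = sin ((\<omega> - \<nu>) * m) / m" for \<omega>
  have "(F has_vector_derivative cos ((\<omega> - \<nu>) * m)) (at \<omega> within S)" for \<omega> S
    unfolding F_def using m
    by (auto intro!: derivative_eq_intros simp: has_real_derivative_iff_has_vector_derivative[symmetric])
  then have "((\<lambda>\<omega>. cos ((\<omega> - \<nu>) * m)) has_integral (F (c + 2 * pi) - F c)) {c..c + 2 * pi}"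
    by (intro fundamental_theorem_of_calculus) auto
  moreover have "F (c + 2 * pi) = F c"
  proof -
    have "(c + 2 * pi - \<nu>) * m = (c - \<nu>) * m + 2 * pi * of_int (int j - int k)"
      by (simp add: m_def algebra_simps)
    moreover have "cos (2 * pi * of_int (int j - int k)) = 1" "sin (2 * pi * of_int (int j - int k)) = 0"
      by (rule cos_int_2pin, rule sin_int_2pin)
    ultimately show ?thesis unfolding F_def by (simp only: sin_add) simp
  qed
  ultimately show ?thesis using False by (simp add: m_def)
qed (use has_integral_const_real[of "1::real" c "c + 2 * pi"] in simp)

lemma nn_integral_dirichlet_sum_period:
  "(\<integral>\<^sup>+\<omega>. ennreal (indicator {c..c + 2 * pi} \<omega> * (cmod (dirichlet_sum n (\<omega> - \<nu>)))\<^sup>2) \<partial>lborel)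
    = ennreal (2 * pi * real n)"
proof (rule nn_integral_has_integral_lborel)
  have "((\<lambda>\<omega>. (cmod (dirichlet_sum n (\<omega> - \<nu>)))\<^sup>2) has_integral (2 * pi * real n)) {c..c + 2 * pi}"
  proof -
    have "((\<lambda>\<omega>. \<Sum>j<n. \<Sum>k<n. cos ((\<omega> - \<nu>) * (real j - real k))) has_integral
        (\<Sum>j<n. \<Sum>k<n. if j = k then 2 * pi else 0)) {c..c + 2 * pi}"
      by (intro has_integral_sum has_integral_cos_period) auto
    then show ?thesis unfolding cmod_dirichlet_sum_power2 by (simp add: mult.commute)
  qed
  then have "((\<lambda>\<omega>. if \<omega> \<in> {c..c + 2 * pi} then (cmod (dirichlet_sum n (\<omega> - \<nu>)))\<^sup>2 else 0)
      has_integral (2 * pi * real n)) UNIV"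
    by (subst has_integral_restrict_UNIV)
  then show "((\<lambda>\<omega>. indicator {c..c + 2 * pi} \<omega> * (cmod (dirichlet_sum n (\<omega> - \<nu>)))\<^sup>2) has_integral (2 * pi * real n)) UNIV"
    by (rule has_integral_eq_rhs[OF has_integral_cong[THEN iffD1, rotated]]) (auto simp: indicator_def)
next
  show "(\<lambda>\<omega>. indicator {c..c + 2 * pi} \<omega> * (cmod (dirichlet_sum n (\<omega> - \<nu>)))\<^sup>2) \<in> borel_measurable borel"
    by measurable
qed simp

lemma nn_integral_periodic_tail_le:
  fixes \<phi> F :: "real \<Rightarrow> real" and B :: "nat \<Rightarrow> real"
  assumes P: "0 < P" and F[measurable]: "F \<in> borel_measurable borel" and F0: "\<And>\<omega>. 0 \<le> F \<omega>"
    and period: "\<And>c. (\<integral>\<^sup>+\<omega>. ennreal (indicator {c..c + P} \<omega> * F \<omega>) \<partial>lborel) = ennreal I"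
    and bound: "\<And>k \<omega>. \<omega> \<in> {A + real k * P..A + real k * P + P} \<Longrightarrow> \<phi> \<omega> \<le> B k"
  shows "(\<integral>\<^sup>+\<omega>. ennreal (indicator {A..} \<omega> * \<phi> \<omega> * F \<omega>) \<partial>lborel) \<le> (\<Sum>k. ennreal (B k)) * ennreal I"
proof -
  let ?J = "\<lambda>k. {A + real k * P..A + real k * P + P}"
  have "ennreal (indicator {A..} \<omega> * \<phi> \<omega> * F \<omega>) \<le> (\<Sum>k. ennreal (B k) * ennreal (indicator (?J k) \<omega> * F \<omega>))" for \<omega>
  proof (cases "A \<le> \<omega>")
    case True
    define k where "k = nat \<lfloor>(\<omega> - A) / P\<rfloor>"
    have "real k \<le> (\<omega> - A) / P" "(\<omega> - A) / P < real k + 1"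
      using True P by (simp_all add: k_def)
    then have k: "\<omega> \<in> ?J k" using P by (simp add: field_simps)
    have "ennreal (indicator {A..} \<omega> * \<phi> \<omega> * F \<omega>) \<le> ennreal (B k * F \<omega>)"
      using True bound[OF k] F0[of \<omega>] by (intro ennreal_leI) (simp add: mult_right_mono)
    also have "\<dots> \<le> ennreal (B k) * ennreal (indicator (?J k) \<omega> * F \<omega>)"
      using k F0[of \<omega>] by (cases "0 \<le> B k") (auto simp: ennreal_mult ennreal_neg mult_nonpos_nonneg)
    also have "\<dots> \<le> (\<Sum>k. ennreal (B k) * ennreal (indicator (?J k) \<omega> * F \<omega>))"
      using sum_le_suminf[OF summableI, of "{k}"] by simp
    finally show ?thesis .
  qed simp
  then have "(\<integral>\<^sup>+\<omega>. ennreal (indicator {A..} \<omega> * \<phi> \<omega> * F \<omega>) \<partial>lborel) \<le>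
      (\<integral>\<^sup>+\<omega>. (\<Sum>k. ennreal (B k) * ennreal (indicator (?J k) \<omega> * F \<omega>)) \<partial>lborel)"
    by (rule nn_integral_mono)
  also have "\<dots> = (\<Sum>k. ennreal (B k) * ennreal I)"
    by (subst nn_integral_suminf) (auto simp: nn_integral_cmult period)
  finally show ?thesis by simp
qed

definition real_zeta :: "real \<Rightarrow> real" where
  "real_zeta s = (\<Sum>k. (real k + 1) powr (- s))"

lemma summable_real_zeta: "1 < s \<Longrightarrow> summable (\<lambda>k. (real k + 1) powr (- s))"
  using summable_Suc_iff[of "\<lambda>k. real k powr (- s)"] summable_real_powr_iff[of "- s"]
  by (simp add: add.commute)

lemma real_zeta_nonneg: "1 < s \<Longrightarrow> 0 \<le> real_zeta s"
  unfolding real_zeta_def by (intro suminf_nonneg summable_real_zeta) auto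

lemma nn_integral_dirichlet_sum_tail_le:
  assumes H: "0 < H"
  shows "(\<integral>\<^sup>+\<omega>. ennreal (indicator {2*pi..} \<omega> * \<omega> powr (-1-2*H) * (cmod (dirichlet_sum n (\<omega> - \<nu>)))\<^sup>2) \<partial>lborel)
    \<le> ennreal (2 * pi * real n * (2*pi) powr (-1-2*H) * real_zeta (1 + 2*H))"
proof -
  have "(\<integral>\<^sup>+\<omega>. ennreal (indicator {2*pi..} \<omega> * \<omega> powr (-1-2*H) * (cmod (dirichlet_sum n (\<omega> - \<nu>)))\<^sup>2) \<partial>lborel)
      \<le> (\<Sum>k. ennreal ((2*pi) powr (-1-2*H) * (real k + 1) powr (-1-2*H))) * ennreal (2 * pi * real n)"
  proof (rule nn_integral_periodic_tail_le)
    fix k \<omega> assume "\<omega> \<in> {2*pi + real k * (2*pi)..2*pi + real k * (2*pi) + 2*pi}"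
    moreover have "2*pi + real k * (2*pi) = 2*pi * (real k + 1)" by (simp add: algebra_simps)
    ultimately show "\<omega> powr (-1-2*H) \<le> (2*pi) powr (-1-2*H) * (real k + 1) powr (-1-2*H)"
      using H by (simp add: powr_mult[symmetric] powr_mono2')
  qed (auto simp: nn_integral_dirichlet_sum_period)
  also have "(\<Sum>k. ennreal ((2*pi) powr (-1-2*H) * (real k + 1) powr (-1-2*H))) = ennreal ((2*pi) powr (-1-2*H) * real_zeta (1 + 2*H))"
    using summable_real_zeta[of "1 + 2*H"] H
    by (simp add: real_zeta_def suminf_ennreal2 summable_mult suminf_mult)
  finally show ?thesis using real_zeta_nonneg[of "1 + 2*H"] H by (simp add: ennreal_mult[symmetric] mult_ac)
qed

lemma fbm_weight_block_transform_le_uniform: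
  assumes H: "H \<le> 1/2"
  shows "fbm_weight H \<omega> * (cmod (block_transform n \<nu> \<omega>))\<^sup>2 \<le>
    (2*pi) powr (1-2*H) * (indicator {0..2*pi} \<omega> * (cmod (dirichlet_sum n (\<omega> - \<nu>)))\<^sup>2)
    + 4 * (indicator {2*pi..} \<omega> * \<omega> powr (-1-2*H) * (cmod (dirichlet_sum n (\<omega> - \<nu>)))\<^sup>2)"
    (is "?L \<le> ?A + ?B")
proof -
  let ?D = "(cmod (dirichlet_sum n (\<omega> - \<nu>)))\<^sup>2"
  have L: "?L = ?D * (fbm_weight H \<omega> * (cmod (increment_transform \<nu> \<omega>))\<^sup>2)"
    by (simp add: block_transform_def norm_mult power_mult_distrib)
  consider "\<omega> \<le> 0" | "0 < \<omega>" "\<omega> \<le> 2*pi" | "2*pi < \<omega>" by linarith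
  then show ?thesis
  proof cases
    case 2
    have "fbm_weight H \<omega> * (cmod (increment_transform \<nu> \<omega>))\<^sup>2 \<le> fbm_weight H \<omega> * \<omega>\<^sup>2"
      using norm_increment_transform_le_abs[of \<nu> \<omega>] 2 by (intro mult_left_mono power_mono) auto
    also have "\<dots> \<le> (2*pi) powr (1-2*H)"
      using 2 H by (simp add: fbm_weight_mult_power2 powr_mono2)
    finally have "?L \<le> ?A" unfolding L using 2 by (simp add: mult_left_mono mult.commute)
    then show ?thesis by (simp add: add_increasing2)
  next
    case 3
    then have "0 < \<omega>" using pi_gt_zero by linarith
    have "?L \<le> ?D * (fbm_weight H \<omega> * 2\<^sup>2)"
      unfolding L using norm_increment_transform_le_2[of \<nu> \<omega>]
      by (intro mult_left_mono power_mono) auto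
    also have "\<dots> = ?B" using 3 \<open>0 < \<omega>\<close> by (simp add: fbm_weight_def)
    finally have "?L \<le> ?B" .
    then show ?thesis using 3 by (simp add: add_increasing)
  qed (simp add: fbm_weight_def)
qed

lemma spectral_energy_block_transform_le_uniform:
  assumes H: "0 < H" "H \<le> 1/2"
  shows "spectral_energy H (block_transform n \<nu>) \<le>
    ennreal (2 * pi * real n * ((2*pi) powr (1-2*H) + 4 * (2*pi) powr (-1-2*H) * real_zeta (1 + 2*H)))"
proof -
  let ?D = "\<lambda>\<omega>. (cmod (dirichlet_sum n (\<omega> - \<nu>)))\<^sup>2"
  have "spectral_energy H (block_transform n \<nu>) \<le>
      (\<integral>\<^sup>+\<omega>. ennreal ((2*pi) powr (1-2*H)) * ennreal (indicator {0..0 + 2*pi} \<omega> * ?D \<omega>)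
        + ennreal 4 * ennreal (indicator {2*pi..} \<omega> * \<omega> powr (-1-2*H) * ?D \<omega>) \<partial>lborel)"
    unfolding spectral_energy_def
    by (intro nn_integral_mono order_trans[OF ennreal_leI[OF fbm_weight_block_transform_le_uniform[OF H(2)]]])
      (simp add: ennreal_mult')
  also have "\<dots> = ennreal ((2*pi) powr (1-2*H)) * ennreal (2 * pi * real n) + ennreal 4 *
      (\<integral>\<^sup>+\<omega>. ennreal (indicator {2*pi..} \<omega> * \<omega> powr (-1-2*H) * ?D \<omega>) \<partial>lborel)"
    using nn_integral_dirichlet_sum_period[of 0] by (simp add: nn_integral_add nn_integral_cmult)
  also have "\<dots> \<le> ennreal ((2*pi) powr (1-2*H)) * ennreal (2 * pi * real n) + ennreal 4 *
      ennreal (2 * pi * real n * (2*pi) powr (-1-2*H) * real_zeta (1 + 2*H))"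
    using nn_integral_dirichlet_sum_tail_le[OF H(1)] by (intro add_mono mult_left_mono) auto
  also have "\<dots> = ennreal ((2*pi) powr (1-2*H) * (2 * pi * real n)
      + 4 * (2 * pi * real n * (2*pi) powr (-1-2*H) * real_zeta (1 + 2*H)))"
  proof -
    have four: "4 * ennreal t = ennreal (4 * t)" for t by (simp add: ennreal_mult')
    show ?thesis using real_zeta_nonneg[of "1 + 2*H"] H
      by (simp add: four ennreal_mult'[symmetric] ennreal_plus[symmetric] del: ennreal_plus ennreal_mult')
  qed
  also have "\<dots> = ennreal (2 * pi * real n * ((2*pi) powr (1-2*H) + 4 * (2*pi) powr (-1-2*H) * real_zeta (1 + 2*H)))"
    by (simp add: algebra_simps)
  finally show ?thesis .
qed

definition cis_integral_majorant :: "real \<Rightarrow> real \<Rightarrow> real" where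
  "cis_integral_majorant T x = (if \<bar>x\<bar> \<le> 2 / T then T\<^sup>2 else 4 / x\<^sup>2)"

lemma measurable_cis_integral_majorant [measurable]: "cis_integral_majorant T \<in> borel_measurable borel"
  unfolding cis_integral_majorant_def by measurable

lemma cis_integral_majorant_nonneg: "0 \<le> cis_integral_majorant T x"
  by (simp add: cis_integral_majorant_def)

lemma norm_cis_integral_power2_le_majorant:
  assumes "0 < T"
  shows "(cmod (cis_integral T x))\<^sup>2 \<le> cis_integral_majorant T x"
proof (cases "\<bar>x\<bar> \<le> 2 / T")
  case True
  then show ?thesis
    using norm_cis_integral_le[of T x] assms by (simp add: cis_integral_majorant_def power_mono)
next
  case False
  then have "x \<noteq> 0" using assms by auto
  then have "(cmod (cis_integral T x))\<^sup>2 \<le> (2 / \<bar>x\<bar>)\<^sup>2"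
    by (intro power_mono norm_cis_integral_le_inverse) auto
  then show ?thesis using False by (simp add: cis_integral_majorant_def power_divide)
qed

lemma cis_integral_majorant_le:
  assumes "0 < T" "x \<noteq> 0"
  shows "cis_integral_majorant T x \<le> 4 / x\<^sup>2"
proof (cases "\<bar>x\<bar> \<le> 2 / T")
  case True
  then have "(T * \<bar>x\<bar>)\<^sup>2 \<le> 2\<^sup>2" using assms by (intro power_mono) (auto simp: field_simps)
  then show ?thesis using True assms by (simp add: cis_integral_majorant_def field_simps power_mult_distrib)
qed (simp add: cis_integral_majorant_def)

lemma nn_integral_cis_integral_majorant_le:
  assumes T: "0 < T"
  shows "(\<integral>\<^sup>+x. ennreal (cis_integral_majorant T x) \<partial>lborel) \<le> ennreal (8 * T)"
proof -
  define a where "a = 2 / T"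
  have a: "0 < a" using T by (simp add: a_def)
  let ?tail = "\<lambda>x. ennreal (indicator {a..} x * x powr (-2))"
  have "ennreal (cis_integral_majorant T x) \<le> ennreal (T\<^sup>2) * indicator {-a..a} x + 4 * ?tail x + 4 * ?tail (- x)" for x
  proof (cases "\<bar>x\<bar> \<le> a")
    case False
    then have "ennreal (cis_integral_majorant T x) = (if 0 < x then 4 * ?tail x else 4 * ?tail (- x))"
      using a by (auto simp: cis_integral_majorant_def a_def powr_minus divide_inverse power2_eq_square ennreal_mult')
    then show ?thesis by (simp add: add_increasing add_increasing2)
  qed (simp add: cis_integral_majorant_def a_def abs_le_iff)
  then have "(\<integral>\<^sup>+x. ennreal (cis_integral_majorant T x) \<partial>lborel) \<le>
      (\<integral>\<^sup>+x. ennreal (T\<^sup>2) * indicator {-a..a} x + 4 * ?tail x + 4 * ?tail (- x) \<partial>lborel)"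
    by (rule nn_integral_mono)
  also have "\<dots> = ennreal (T\<^sup>2) * ennreal (2 * a) + 4 * integral\<^sup>N lborel ?tail + 4 * (\<integral>\<^sup>+x. ?tail (- x) \<partial>lborel)"
    using a by (simp add: nn_integral_add nn_integral_cmult nn_integral_cmult_indicator)
  also have "(\<integral>\<^sup>+x. ?tail (- x) \<partial>lborel) = integral\<^sup>N lborel ?tail"
    using nn_integral_real_affine[of ?tail "-1" 0] by simp
  also have "integral\<^sup>N lborel ?tail = ennreal (T / 2)"
    using nn_integral_powr_to_inf[of "-2" a] a by (simp add: a_def)
  also have "ennreal (T\<^sup>2) * ennreal (2 * a) + 4 * ennreal (T / 2) + 4 * ennreal (T / 2) = ennreal (8 * T)"
  proof -
    have four: "4 * ennreal t = ennreal (4 * t)" for t by (simp add: ennreal_mult')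
    show ?thesis using T a
      by (simp add: four a_def power2_eq_square ennreal_mult[symmetric] ennreal_plus[symmetric]
          del: ennreal_plus ennreal_mult')
  qed
  finally show ?thesis by simp
qed

lemma norm_block_transform_power2_le:
  assumes "\<nu> \<noteq> 0" "1 \<le> n"
  shows "(cmod (block_transform n \<nu> \<omega>))\<^sup>2 \<le>
    2 * cis_integral_majorant (real n) (\<omega> - \<nu>) + 8 / \<nu>\<^sup>2 * (cmod (dirichlet_sum n (\<omega> - \<nu>)))\<^sup>2"
proof -
  have "(cmod (cis_integral 1 (- \<nu>)))\<^sup>2 \<le> (2 / \<bar>\<nu>\<bar>)\<^sup>2"
    using assms norm_cis_integral_le_inverse[of "- \<nu>" 1] by (intro power_mono) auto
  then have "(cmod (cis_integral 1 (- \<nu>)))\<^sup>2 \<le> 4 / \<nu>\<^sup>2" by (simp add: power_divide)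
  then have "(cmod (dirichlet_sum n (\<omega> - \<nu>) * cis_integral 1 (- \<nu>)))\<^sup>2 \<le> (cmod (dirichlet_sum n (\<omega> - \<nu>)))\<^sup>2 * (4 / \<nu>\<^sup>2)"
    unfolding norm_mult power_mult_distrib by (rule mult_left_mono) simp
  moreover have "(cmod (cis_integral (real n) (\<omega> - \<nu>)))\<^sup>2 \<le> cis_integral_majorant (real n) (\<omega> - \<nu>)"
    using assms by (intro norm_cis_integral_power2_le_majorant) auto
  ultimately show ?thesis
    using norm_add_power2_le[of "cis_integral (real n) (\<omega> - \<nu>)" "- dirichlet_sum n (\<omega> - \<nu>) * cis_integral 1 (- \<nu>)"]
    unfolding block_transform_eq by simp
qed

lemma powr_mult_cis_integral_majorant_le:
  assumes \<omega>: "0 < \<omega>" and \<nu>: "\<nu> \<noteq> 0" and T: "0 < T" and e: "e \<le> 0"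
  shows "\<omega> powr e * cis_integral_majorant T (\<omega> - \<nu>) \<le>
    16 / \<nu>\<^sup>2 * \<omega> powr e + (\<bar>\<nu>\<bar> / 2) powr e * cis_integral_majorant T (\<omega> - \<nu>)"
proof (cases "\<omega> < \<bar>\<nu>\<bar> / 2")
  case True
  have "\<bar>\<nu>\<bar> \<le> \<omega> + \<bar>\<omega> - \<nu>\<bar>" using abs_triangle_ineq4[of \<omega> "\<omega> - \<nu>"] \<omega> by simp
  then have far: "\<bar>\<nu>\<bar> / 2 \<le> \<bar>\<omega> - \<nu>\<bar>" using True by linarith
  then have "\<omega> - \<nu> \<noteq> 0" using \<nu> by auto
  then have "cis_integral_majorant T (\<omega> - \<nu>) \<le> 4 / (\<omega> - \<nu>)\<^sup>2" by (rule cis_integral_majorant_le[OF T])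
  also have "\<dots> \<le> 4 / (\<bar>\<nu>\<bar> / 2)\<^sup>2"
  proof -
    have "(\<bar>\<nu>\<bar> / 2)\<^sup>2 \<le> \<bar>\<omega> - \<nu>\<bar>\<^sup>2" using far by (intro power_mono) auto
    then show ?thesis using \<nu> \<open>\<omega> - \<nu> \<noteq> 0\<close> by (intro divide_left_mono) auto
  qed
  finally have "\<omega> powr e * cis_integral_majorant T (\<omega> - \<nu>) \<le> \<omega> powr e * (16 / \<nu>\<^sup>2)"
    by (intro mult_left_mono) (auto simp: power_divide)
  then show ?thesis using cis_integral_majorant_nonneg[of T "\<omega> - \<nu>"] by (simp add: add_increasing2 mult.commute)
next
  case False
  then have "\<omega> powr e \<le> (\<bar>\<nu>\<bar> / 2) powr e" using e \<nu> by (intro powr_mono2') auto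
  then show ?thesis using cis_integral_majorant_nonneg[of T "\<omega> - \<nu>"] \<omega>
    by (intro add_increasing) (auto intro: mult_right_mono)
qed

lemma fbm_weight_block_transform_le_decay:
  fixes \<omega> :: real
  assumes H: "0 < H" "H \<le> 1/2" and \<nu>: "\<nu> \<noteq> 0" and n: "1 \<le> n"
  defines "D \<equiv> (cmod (dirichlet_sum n (\<omega> - \<nu>)))\<^sup>2"
  shows "fbm_weight H \<omega> * (cmod (block_transform n \<nu> \<omega>))\<^sup>2 \<le>
      4 / \<nu>\<^sup>2 * (2*pi) powr (1-2*H) * (indicator {0..2*pi} \<omega> * D)
    + 8 / \<nu>\<^sup>2 * (indicator {2*pi..} \<omega> * \<omega> powr (-1-2*H) * D)
    + 32 / \<nu>\<^sup>2 * (indicator {2*pi..} \<omega> * \<omega> powr (-1-2*H))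
    + 2 * (\<bar>\<nu>\<bar> / 2) powr (-1-2*H) * cis_integral_majorant (real n) (\<omega> - \<nu>)"
    (is "?L \<le> ?A + ?B + ?C + ?E")
proof -
  have nonneg: "0 \<le> ?A" "0 \<le> ?B" "0 \<le> ?C" "0 \<le> ?E"
    using cis_integral_majorant_nonneg by (auto simp: D_def)
  consider "\<omega> \<le> 0" | "0 < \<omega>" "\<omega> \<le> 2*pi" | "2*pi < \<omega>" by linarith
  then show ?thesis
  proof cases
    case 1
    then show ?thesis using nonneg by (simp add: fbm_weight_def)
  next
    case 2
    have "(cmod (increment_transform \<nu> \<omega>))\<^sup>2 \<le> (2 * \<bar>\<omega>\<bar> / \<bar>\<nu>\<bar>)\<^sup>2"
      using norm_increment_transform_le_ratio[OF \<nu>] by (intro power_mono) auto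
    then have "fbm_weight H \<omega> * (cmod (increment_transform \<nu> \<omega>))\<^sup>2 \<le> fbm_weight H \<omega> * (4 * \<omega>\<^sup>2 / \<nu>\<^sup>2)"
      by (intro mult_left_mono) (simp_all add: power_divide power_mult_distrib)
    also have "\<dots> = 4 / \<nu>\<^sup>2 * (fbm_weight H \<omega> * \<omega>\<^sup>2)" by simp
    also have "\<dots> \<le> 4 / \<nu>\<^sup>2 * (2*pi) powr (1-2*H)"
      using 2 H by (intro mult_left_mono) (simp_all add: fbm_weight_mult_power2 powr_mono2)
    finally have "D * (fbm_weight H \<omega> * (cmod (increment_transform \<nu> \<omega>))\<^sup>2) \<le> D * (4 / \<nu>\<^sup>2 * (2*pi) powr (1-2*H))"
      by (rule mult_left_mono) (simp add: D_def)
    then have "?L \<le> ?A"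
      using 2 by (simp add: block_transform_def D_def norm_mult power_mult_distrib mult_ac)
    then show ?thesis using nonneg by linarith
  next
    case 3
    then have \<omega>: "0 < \<omega>" using pi_gt_zero by linarith
    have "?L \<le> \<omega> powr (-1-2*H) * (2 * cis_integral_majorant (real n) (\<omega> - \<nu>) + 8 / \<nu>\<^sup>2 * D)"
      using \<omega> norm_block_transform_power2_le[OF \<nu> n] by (simp add: fbm_weight_def D_def mult_left_mono)
    also have "\<dots> \<le> ?B + ?C + ?E"
      using powr_mult_cis_integral_majorant_le[OF \<omega> \<nu>, of "real n" "-1-2*H"] 3 n H
      by (simp add: algebra_simps)
    finally show ?thesis using nonneg by linarith
  qed
qed

lemma nn_integral_cis_integral_majorant_shift_le:
  "0 < T \<Longrightarrow> (\<integral>\<^sup>+\<omega>. ennreal (cis_integral_majorant T (\<omega> - \<nu>)) \<partial>lborel) \<le> ennreal (8 * T)"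
  using nn_integral_real_affine[of "\<lambda>x. ennreal (cis_integral_majorant T x)" 1 "- \<nu>"]
    nn_integral_cis_integral_majorant_le[of T] by simp

lemma spectral_energy_block_transform_le_decay:
  assumes H: "0 < H" "H \<le> 1/2" and \<nu>: "\<nu> \<noteq> 0" and n: "1 \<le> n"
  shows "spectral_energy H (block_transform n \<nu>) \<le> ennreal (
      4 / \<nu>\<^sup>2 * (2*pi) powr (1-2*H) * (2 * pi * real n)
    + 8 / \<nu>\<^sup>2 * (2 * pi * real n * (2*pi) powr (-1-2*H) * real_zeta (1 + 2*H))
    + 32 / \<nu>\<^sup>2 * ((2*pi) powr (-2*H) / (2*H))
    + 2 * (\<bar>\<nu>\<bar> / 2) powr (-1-2*H) * (8 * real n))"
proof -
  let ?D = "\<lambda>\<omega>. (cmod (dirichlet_sum n (\<omega> - \<nu>)))\<^sup>2"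
  define c1 c2 c3 c4 where "c1 = 4 / \<nu>\<^sup>2 * (2*pi) powr (1-2*H)" and "c2 = 8 / \<nu>\<^sup>2"
    and "c3 = 32 / \<nu>\<^sup>2" and "c4 = 2 * (\<bar>\<nu>\<bar> / 2) powr (-1-2*H)"
  have c: "0 \<le> c1" "0 \<le> c2" "0 \<le> c3" "0 \<le> c4" by (simp_all add: c1_def c2_def c3_def c4_def)
  have "spectral_energy H (block_transform n \<nu>) \<le> (\<integral>\<^sup>+\<omega>.
        ennreal c1 * ennreal (indicator {0..2*pi} \<omega> * ?D \<omega>)
      + ennreal c2 * ennreal (indicator {2*pi..} \<omega> * \<omega> powr (-1-2*H) * ?D \<omega>)
      + ennreal c3 * ennreal (indicator {2*pi..} \<omega> * \<omega> powr (-1-2*H))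
      + ennreal c4 * ennreal (cis_integral_majorant (real n) (\<omega> - \<nu>)) \<partial>lborel)"
    unfolding spectral_energy_def using c cis_integral_majorant_nonneg
    by (intro nn_integral_mono order_trans[OF ennreal_leI[OF fbm_weight_block_transform_le_decay[OF H \<nu> n]]])
      (simp add: c1_def c2_def c3_def c4_def ennreal_mult'[symmetric] ennreal_plus[symmetric] del: ennreal_plus)
  also have "\<dots> = ennreal c1 * (\<integral>\<^sup>+\<omega>. ennreal (indicator {0..2*pi} \<omega> * ?D \<omega>) \<partial>lborel)
      + ennreal c2 * (\<integral>\<^sup>+\<omega>. ennreal (indicator {2*pi..} \<omega> * \<omega> powr (-1-2*H) * ?D \<omega>) \<partial>lborel)
      + ennreal c3 * (\<integral>\<^sup>+\<omega>. ennreal (indicator {2*pi..} \<omega> * \<omega> powr (-1-2*H)) \<partial>lborel)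
      + ennreal c4 * (\<integral>\<^sup>+\<omega>. ennreal (cis_integral_majorant (real n) (\<omega> - \<nu>)) \<partial>lborel)"
    by (subst nn_integral_add, measurable)+ (simp add: nn_integral_cmult)
  also have "\<dots> \<le> ennreal c1 * ennreal (2 * pi * real n)
      + ennreal c2 * ennreal (2 * pi * real n * (2*pi) powr (-1-2*H) * real_zeta (1 + 2*H))
      + ennreal c3 * ennreal ((2*pi) powr (-2*H) / (2*H))
      + ennreal c4 * ennreal (8 * real n)"
    using nn_integral_dirichlet_sum_period[of 0 n \<nu>] nn_integral_dirichlet_sum_tail_le[OF H(1), of n \<nu>]
      nn_integral_powr_to_inf[of "-1-2*H" "2*pi"] nn_integral_cis_integral_majorant_shift_le[of "real n" \<nu>] H n
    by (intro add_mono mult_left_mono) auto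
  also have "\<dots> = ennreal (c1 * (2 * pi * real n) + c2 * (2 * pi * real n * (2*pi) powr (-1-2*H) * real_zeta (1 + 2*H))
      + c3 * ((2*pi) powr (-2*H) / (2*H)) + c4 * (8 * real n))"
    using c H real_zeta_nonneg[of "1 + 2*H"]
    by (simp add: ennreal_mult[symmetric] ennreal_plus[symmetric] del: ennreal_plus ennreal_mult')
  finally show ?thesis by (simp add: c1_def c2_def c3_def c4_def)
qed

lemma spectral_energy_block_transform_le_high_frequency:
  assumes H: "0 < H" "H \<le> 1/2" and \<nu>: "1 < \<bar>\<nu>\<bar>" and n: "1 \<le> n" and \<gamma>: "0 \<le> \<gamma>" "\<gamma> \<le> 1 + 2*H"
  shows "spectral_energy H (block_transform n \<nu>) \<le> ennreal ((8 * pi * (2*pi) powr (1-2*H)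
    + 16 * pi * (2*pi) powr (-1-2*H) * real_zeta (1 + 2*H) + 16 * (2*pi) powr (-2*H) / H + 16 * 2 powr (1 + 2*H))
    * real n * \<bar>\<nu>\<bar> powr (- \<gamma>))"
proof -
  define a1 a2 a3 a4 where "a1 = 8 * pi * (2*pi) powr (1-2*H)"
    and "a2 = 16 * pi * (2*pi) powr (-1-2*H) * real_zeta (1 + 2*H)"
    and "a3 = 16 * (2*pi) powr (-2*H) / H" and "a4 = 16 * 2 powr (1 + 2*H)"
  let ?r = "\<bar>\<nu>\<bar> powr (- \<gamma>)"
  have a: "0 \<le> a1" "0 \<le> a2" "0 \<le> a3" "0 \<le> a4"
    using H real_zeta_nonneg[of "1 + 2*H"] by (simp_all add: a1_def a2_def a3_def a4_def)
  have "\<bar>\<nu>\<bar> powr 2 = \<nu>\<^sup>2" using \<nu> by (simp add: powr_numeral)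
  then have inv: "1 / \<nu>\<^sup>2 \<le> ?r"
    using \<nu> H \<gamma> powr_mono[of "-2" "- \<gamma>" "\<bar>\<nu>\<bar>"] by (simp add: powr_minus_divide)
  have pw: "\<bar>\<nu>\<bar> powr (-1-2*H) \<le> ?r" using \<nu> \<gamma> by (intro powr_mono) auto
  have "(2::real) powr (-1-2*H) = inverse (2 powr (1 + 2*H))"
    using powr_minus[of 2 "1 + 2*H"] by (simp add: algebra_simps)
  then have half: "(\<bar>\<nu>\<bar> / 2) powr (-1-2*H) = 2 powr (1 + 2*H) * \<bar>\<nu>\<bar> powr (-1-2*H)"
    by (simp add: powr_divide field_simps)
  have "4 / \<nu>\<^sup>2 * (2*pi) powr (1-2*H) * (2 * pi * real n)
      + 8 / \<nu>\<^sup>2 * (2 * pi * real n * (2*pi) powr (-1-2*H) * real_zeta (1 + 2*H))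
      + 32 / \<nu>\<^sup>2 * ((2*pi) powr (-2*H) / (2*H))
      + 2 * (\<bar>\<nu>\<bar> / 2) powr (-1-2*H) * (8 * real n)
      = a1 * real n * (1 / \<nu>\<^sup>2) + a2 * real n * (1 / \<nu>\<^sup>2) + a3 * (1 / \<nu>\<^sup>2) + a4 * real n * \<bar>\<nu>\<bar> powr (-1-2*H)"
    unfolding half a1_def a2_def a3_def a4_def by (simp add: field_simps)
  also have "\<dots> \<le> a1 * real n * ?r + a2 * real n * ?r + a3 * real n * ?r + a4 * real n * ?r"
  proof (intro add_mono)
    show "a1 * real n * (1 / \<nu>\<^sup>2) \<le> a1 * real n * ?r" "a2 * real n * (1 / \<nu>\<^sup>2) \<le> a2 * real n * ?r"
      using a inv by (intro mult_left_mono; simp)+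
    show "a4 * real n * \<bar>\<nu>\<bar> powr (-1-2*H) \<le> a4 * real n * ?r"
      using a pw by (simp add: mult_left_mono)
    have "a3 * (1 / \<nu>\<^sup>2) \<le> a3 * ?r" using a inv by (intro mult_left_mono) simp_all
    also have "\<dots> \<le> a3 * (real n * ?r)"
      using a n mult_right_mono[of 1 "real n" ?r] by (intro mult_left_mono) auto
    finally show "a3 * (1 / \<nu>\<^sup>2) \<le> a3 * real n * ?r" by simp
  qed
  also have "\<dots> = (a1 + a2 + a3 + a4) * real n * ?r" by (simp add: algebra_simps)
  finally have "spectral_energy H (block_transform n \<nu>) \<le> ennreal ((a1 + a2 + a3 + a4) * real n * ?r)"
    using \<nu> by (intro order_trans[OF spectral_energy_block_transform_le_decay[OF H _ n] ennreal_leI]) auto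
  then show ?thesis by (simp only: a1_def a2_def a3_def a4_def)
qed

lemma spectral_energy_block_transform_le:
  assumes H: "0 < H" "H \<le> 1/2"
  obtains K where "0 \<le> K" and "\<And>n \<nu> \<gamma>. 1 \<le> n \<Longrightarrow> \<nu> \<noteq> 0 \<Longrightarrow> 0 \<le> \<gamma> \<Longrightarrow> \<gamma> \<le> 1 + 2*H \<Longrightarrow>
    spectral_energy H (block_transform n \<nu>) \<le> ennreal (K * real n * \<bar>\<nu>\<bar> powr (- \<gamma>))"
proof -
  define KU where "KU = 2 * pi * ((2*pi) powr (1-2*H) + 4 * (2*pi) powr (-1-2*H) * real_zeta (1 + 2*H))"
  define KD where "KD = 8 * pi * (2*pi) powr (1-2*H) + 16 * pi * (2*pi) powr (-1-2*H) * real_zeta (1 + 2*H)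
    + 16 * (2*pi) powr (-2*H) / H + 16 * 2 powr (1 + 2*H)"
  have K: "0 \<le> KU" "0 \<le> KD" using H real_zeta_nonneg[of "1 + 2*H"] by (simp_all add: KU_def KD_def)
  show thesis
  proof (rule that[of "KU + KD"])
    fix n :: nat and \<nu> \<gamma> :: real assume n: "1 \<le> n" and \<nu>: "\<nu> \<noteq> 0" and \<gamma>: "0 \<le> \<gamma>" "\<gamma> \<le> 1 + 2*H"
    let ?r = "\<bar>\<nu>\<bar> powr (- \<gamma>)"
    show "spectral_energy H (block_transform n \<nu>) \<le> ennreal ((KU + KD) * real n * ?r)"
    proof (cases "\<bar>\<nu>\<bar> \<le> 1")
      case True
      then have "1 \<le> ?r" using powr_mono2'[of "- \<gamma>" "\<bar>\<nu>\<bar>" 1] \<nu> \<gamma> by simp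
      have "2 * pi * real n * ((2*pi) powr (1-2*H) + 4 * (2*pi) powr (-1-2*H) * real_zeta (1 + 2*H))
          = KU * real n" by (simp add: KU_def)
      also have "\<dots> \<le> (KU + KD) * real n" using K by (intro mult_right_mono) auto
      also have "\<dots> \<le> (KU + KD) * real n * ?r"
        using mult_left_mono[OF \<open>1 \<le> ?r\<close>, of "(KU + KD) * real n"] K by simp
      finally show ?thesis
        by (intro order_trans[OF spectral_energy_block_transform_le_uniform[OF H] ennreal_leI])
    next
      case False
      have "KD * real n * ?r \<le> (KU + KD) * real n * ?r" using K by (simp add: mult_right_mono)
      then show ?thesis
        using False unfolding KD_def
        by (intro order_trans[OF spectral_energy_block_transform_le_high_frequency[OF H _ n \<gamma>] ennreal_leI]) auto
    qed
  qed (use K in simp)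
qed

lemma spectral_energy_error_functional_le:
  assumes H: "0 < H" "H \<le> 1/2"
  obtains K where "0 \<le> K" and "\<And>n \<tau> \<mu> \<gamma>. 1 \<le> n \<Longrightarrow> 0 < \<tau> \<Longrightarrow> 0 < \<mu> \<Longrightarrow> 0 \<le> \<gamma> \<Longrightarrow> \<gamma> \<le> 1 + 2*H \<Longrightarrow>
    spectral_energy H (\<lambda>\<omega>. error_functional n \<tau> \<mu> (\<lambda>s. cis (\<omega> * s)))
      \<le> ennreal (K * (real n * \<tau>) * \<tau> powr (1 + 2*H) * (\<mu> * \<tau>) powr (- \<gamma>))"
proof -
  obtain K where K: "0 \<le> K" "\<And>n \<nu> \<gamma>. 1 \<le> n \<Longrightarrow> \<nu> \<noteq> 0 \<Longrightarrow> 0 \<le> \<gamma> \<Longrightarrow> \<gamma> \<le> 1 + 2*H \<Longrightarrow>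
      spectral_energy H (block_transform n \<nu>) \<le> ennreal (K * real n * \<bar>\<nu>\<bar> powr (- \<gamma>))"
    using spectral_energy_block_transform_le[OF H] by blast
  show thesis
  proof (rule that[of "2 * K"])
    fix n :: nat and \<tau> \<mu> \<gamma> :: real
    assume n: "1 \<le> n" and \<tau>: "0 < \<tau>" and \<mu>: "0 < \<mu>" and \<gamma>: "0 \<le> \<gamma>" "\<gamma> \<le> 1 + 2*H"
    let ?g = "\<lambda>x. error_functional n 1 (\<mu> * \<tau>) (\<lambda>s. cis (x * s))"
    let ?b = "K * real n * (\<mu> * \<tau>) powr (- \<gamma>)"
    have "error_functional n \<tau> \<mu> (\<lambda>s. cis (\<omega> * s)) = \<tau> *\<^sub>R ?g (\<omega> * \<tau>)" for \<omega>
      using error_functional_rescale[of "\<lambda>s. cis (\<omega> * s)" \<tau> n \<mu>] \<tau>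
      by (simp add: continuous_intros mult.assoc mult.commute[of \<tau>])
    then have "spectral_energy H (\<lambda>\<omega>. error_functional n \<tau> \<mu> (\<lambda>s. cis (\<omega> * s)))
        = ennreal (\<tau> powr (2 + 2*H)) * spectral_energy H ?g"
      using spectral_energy_rescale[OF measurable_error_functional_cis \<tau>] by simp
    also have "\<dots> \<le> ennreal (\<tau> powr (2 + 2*H)) * (ennreal ?b + ennreal ?b)"
      using K(2)[OF n _ \<gamma>, of "\<mu> * \<tau>"] K(2)[OF n _ \<gamma>, of "- (\<mu> * \<tau>)"] \<tau> \<mu>
      by (intro mult_left_mono order_trans[OF spectral_energy_error_functional_unit_le] add_mono) auto
    also have "\<dots> = ennreal (2 * K * (real n * \<tau>) * \<tau> powr (1 + 2*H) * (\<mu> * \<tau>) powr (- \<gamma>))"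
      using K(1) \<tau> by (simp add: ennreal_mult[symmetric] ennreal_plus[symmetric] powr_add power2_eq_square mult_ac
          del: ennreal_plus ennreal_mult')
    finally show "spectral_energy H (\<lambda>\<omega>. error_functional n \<tau> \<mu> (\<lambda>s. cis (\<omega> * s)))
        \<le> ennreal (2 * K * (real n * \<tau>) * \<tau> powr (1 + 2*H) * (\<mu> * \<tau>) powr (- \<gamma>))" .
  qed (use K(1) in simp)
qed

section \<open>Second moment of the error\<close>

lemma error_functional_real:
  "error_functional n \<tau> \<mu> f = (\<Sum>j<n. integral {real j * \<tau> .. real (Suc j) * \<tau>}
    (\<lambda>s. cos (\<mu> * (real n * \<tau> - s)) * (f s - f (real j * \<tau>))))"
  by (simp add: error_functional_def)

lemma fbm_error_second_moment_bound:
  assumes H: "0 < H" "H < 1/2"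
  obtains K where "0 \<le> K" and "\<And>M X n \<tau> T \<mu> \<gamma>. prob_space M \<Longrightarrow> is_fbm M H X \<Longrightarrow> 1 \<le> n \<Longrightarrow> 0 < \<tau> \<Longrightarrow>
    real n * \<tau> \<le> T \<Longrightarrow> 0 < \<mu> \<Longrightarrow> 0 \<le> \<gamma> \<Longrightarrow> \<gamma> \<le> 1 + 2*H \<Longrightarrow>
    (\<integral>\<^sup>+\<omega>. ennreal ((error_functional n \<tau> \<mu> (\<lambda>s. X s \<omega>))\<^sup>2) \<partial>M)
      \<le> ennreal (K * T * \<tau> powr (1 + 2*H) * (\<mu> * \<tau>) powr (- \<gamma>))"
proof -
  obtain K where K: "0 \<le> K" "\<And>n \<tau> \<mu> \<gamma>. 1 \<le> n \<Longrightarrow> 0 < \<tau> \<Longrightarrow> 0 < \<mu> \<Longrightarrow> 0 \<le> \<gamma> \<Longrightarrow> \<gamma> \<le> 1 + 2*H \<Longrightarrow>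
      spectral_energy H (\<lambda>\<omega>. error_functional n \<tau> \<mu> (\<lambda>s. cis (\<omega> * s)))
        \<le> ennreal (K * (real n * \<tau>) * \<tau> powr (1 + 2*H) * (\<mu> * \<tau>) powr (- \<gamma>))"
    using spectral_energy_error_functional_le[of H] H by auto
  have c: "0 < fbm_const H" using fbm_const_pos H by simp
  show thesis
  proof (rule that[of "K / (2 * fbm_const H)"])
    fix M :: "'a measure" and X :: "real \<Rightarrow> 'a \<Rightarrow> real" and n :: nat and \<tau> T \<mu> \<gamma> :: real
    assume M: "prob_space M" and X: "is_fbm M H X" and n: "1 \<le> n" and \<tau>: "0 < \<tau>" and nT: "real n * \<tau> \<le> T"
      and \<mu>: "0 < \<mu>" and \<gamma>: "0 \<le> \<gamma>" "\<gamma> \<le> 1 + 2*H"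
    have "(\<integral>\<^sup>+\<omega>. ennreal ((error_functional n \<tau> \<mu> (\<lambda>s. X s \<omega>))\<^sup>2) \<partial>M)
        \<le> ennreal (1 / (2 * fbm_const H)) * ennreal (K * (real n * \<tau>) * \<tau> powr (1 + 2*H) * (\<mu> * \<tau>) powr (- \<gamma>))"
      using H \<tau> by (intro order_trans[OF fbm_error_second_moment_le_spectral_energy[OF M X] mult_left_mono[OF K(2)[OF n \<tau> \<mu> \<gamma>]]]) auto
    also have "\<dots> = ennreal (K / (2 * fbm_const H) * (\<tau> powr (1 + 2*H) * (\<mu> * \<tau>) powr (- \<gamma>)) * (real n * \<tau>))"
      using c by (simp add: ennreal_mult'[symmetric] mult_ac)
    also have "\<dots> \<le> ennreal (K / (2 * fbm_const H) * (\<tau> powr (1 + 2*H) * (\<mu> * \<tau>) powr (- \<gamma>)) * T)"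
      using c K(1) nT by (intro ennreal_leI mult_left_mono) auto
    also have "\<dots> = ennreal (K / (2 * fbm_const H) * T * \<tau> powr (1 + 2*H) * (\<mu> * \<tau>) powr (- \<gamma>))"
      by (simp add: mult_ac)
    finally show "(\<integral>\<^sup>+\<omega>. ennreal ((error_functional n \<tau> \<mu> (\<lambda>s. X s \<omega>))\<^sup>2) \<partial>M)
        \<le> ennreal (K / (2 * fbm_const H) * T * \<tau> powr (1 + 2*H) * (\<mu> * \<tau>) powr (- \<gamma>))" .
  qed (use K(1) c in simp)
qed

text \<open>For \<open>\<rho> \<le> 0\<close> the exponent \<open>\<gamma> = -4\<rho>/\<alpha>\<close> converts the power of \<open>\<lambda>\<close> into one of \<open>\<tau>\<close>; for \<open>\<rho> > 0\<close>, \<open>l\<^sub>0 \<le> l\<close> absorbs \<open>l\<^sup>2\<^sup>\<rho>\<close>.\<close>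
lemma mode_rate_le:
  fixes \<alpha> H \<rho> l\<^sub>0 :: real
  assumes \<alpha>: "0 < \<alpha>" and H: "0 < H" and \<rho>: "- \<alpha>/4 - H*\<alpha>/2 < \<rho>" and l\<^sub>0: "0 < l\<^sub>0"
  defines "\<kappa> \<equiv> \<alpha>/2 + H*\<alpha> + 2*\<rho>"
  obtains \<gamma> L where "0 \<le> \<gamma>" "\<gamma> \<le> 1 + 2*H" "0 \<le> L"
    "\<And>l \<tau>. l\<^sub>0 \<le> l \<Longrightarrow> 0 < \<tau> \<Longrightarrow> \<tau> powr (1 + 2*H) * (l powr (\<alpha>/2) * \<tau>) powr (- \<gamma>)
       \<le> L * \<tau> powr (if \<kappa> \<le> \<alpha>/2 + H*\<alpha> then 2*\<kappa>/\<alpha> else 2*H + 1) * l powr (2*\<rho>)"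
proof (cases "\<rho> \<le> 0")
  case True
  show thesis
  proof (rule that[of "- 4*\<rho>/\<alpha>" 1])
    show "0 \<le> - 4*\<rho>/\<alpha>" "0 \<le> (1::real)" using True \<alpha> by (simp_all add: divide_nonpos_pos)
    show "- 4*\<rho>/\<alpha> \<le> 1 + 2*H" using \<rho> \<alpha> by (simp add: field_simps)
    fix l \<tau> :: real assume "l\<^sub>0 \<le> l" "0 < \<tau>"
    then have "0 < l" using l\<^sub>0 by linarith
    have "(l powr (\<alpha>/2) * \<tau>) powr (4*\<rho>/\<alpha>) = l powr (2*\<rho>) * \<tau> powr (4*\<rho>/\<alpha>)"
      using \<open>0 < l\<close> \<open>0 < \<tau>\<close> \<alpha> by (simp add: powr_mult powr_powr)
    moreover have "1 + 2*H + 4*\<rho>/\<alpha> = 2*\<kappa>/\<alpha>" using \<alpha> by (simp add: \<kappa>_def field_simps)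
    then have "\<tau> powr (1 + 2*H) * \<tau> powr (4*\<rho>/\<alpha>) = \<tau> powr (2*\<kappa>/\<alpha>)"
      by (simp add: powr_add[symmetric])
    ultimately show "\<tau> powr (1 + 2*H) * (l powr (\<alpha>/2) * \<tau>) powr (- (- 4*\<rho>/\<alpha>))
        \<le> 1 * \<tau> powr (if \<kappa> \<le> \<alpha>/2 + H*\<alpha> then 2*\<kappa>/\<alpha> else 2*H + 1) * l powr (2*\<rho>)"
      using True by (simp add: \<kappa>_def mult_ac)
  qed
next
  case False
  show thesis
  proof (rule that[of 0 "l\<^sub>0 powr (- 2*\<rho>)"])
    fix l \<tau> :: real assume "l\<^sub>0 \<le> l" "0 < \<tau>"
    have "1 \<le> l\<^sub>0 powr (- 2*\<rho>) * l powr (2*\<rho>)"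
      using powr_mono2[of "2*\<rho>" l\<^sub>0 l] \<open>l\<^sub>0 \<le> l\<close> l\<^sub>0 False
      by (simp add: powr_minus field_simps)
    then have "\<tau> powr (1 + 2*H) \<le> (l\<^sub>0 powr (- 2*\<rho>) * l powr (2*\<rho>)) * \<tau> powr (1 + 2*H)"
      using mult_right_mono[of 1 _ "\<tau> powr (1 + 2*H)"] by simp
    then have "\<tau> powr (1 + 2*H) \<le> l\<^sub>0 powr (- 2*\<rho>) * \<tau> powr (2*H + 1) * l powr (2*\<rho>)"
      by (simp add: add.commute mult_ac)
    then show "\<tau> powr (1 + 2*H) * (l powr (\<alpha>/2) * \<tau>) powr (- 0)
        \<le> l\<^sub>0 powr (- 2*\<rho>) * \<tau> powr (if \<kappa> \<le> \<alpha>/2 + H*\<alpha> then 2*\<kappa>/\<alpha> else 2*H + 1) * l powr (2*\<rho>)"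
      using False \<open>0 < \<tau>\<close> \<open>l\<^sub>0 \<le> l\<close> l\<^sub>0 by (simp add: \<kappa>_def)
  qed (use H in simp_all)
qed

lemma nn_integral_weighted_suminf_le:
  fixes Y :: "nat \<Rightarrow> 'a \<Rightarrow> real"
  assumes Y: "\<And>i. Y i \<in> borel_measurable M" and q: "\<And>i. 0 \<le> q i" and b: "\<And>i. 0 \<le> b i" and B: "0 \<le> B"
    and summable: "summable (\<lambda>i. b i * q i)"
    and moment: "\<And>i. (\<integral>\<^sup>+\<omega>. ennreal ((Y i \<omega>)\<^sup>2) \<partial>M) \<le> ennreal (B * b i)"
  shows "(\<integral>\<^sup>+\<omega>. (\<Sum>i. ennreal (q i * (Y i \<omega>)\<^sup>2)) \<partial>M) \<le> ennreal (B * (\<Sum>i. b i * q i))"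
proof -
  have "(\<integral>\<^sup>+\<omega>. (\<Sum>i. ennreal (q i * (Y i \<omega>)\<^sup>2)) \<partial>M) = (\<Sum>i. ennreal (q i) * (\<integral>\<^sup>+\<omega>. ennreal ((Y i \<omega>)\<^sup>2) \<partial>M))"
    using Y q by (simp add: nn_integral_suminf nn_integral_cmult ennreal_mult)
  also have "\<dots> \<le> (\<Sum>i. ennreal (B * (b i * q i)))"
  proof (intro suminf_le)
    fix i
    have "ennreal (q i) * (\<integral>\<^sup>+\<omega>. ennreal ((Y i \<omega>)\<^sup>2) \<partial>M) \<le> ennreal (q i) * ennreal (B * b i)"
      by (intro mult_left_mono moment) simp
    also have "\<dots> = ennreal (B * (b i * q i))" using q[of i] by (simp add: ennreal_mult'[symmetric] mult_ac)
    finally show "ennreal (q i) * (\<integral>\<^sup>+\<omega>. ennreal ((Y i \<omega>)\<^sup>2) \<partial>M) \<le> ennreal (B * (b i * q i))" .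
  qed auto
  also have "\<dots> = ennreal (B * (\<Sum>i. b i * q i))"
    using B b q summable by (simp add: suminf_ennreal2 summable_mult suminf_mult)
  finally show ?thesis .
qed

lemma fbm_error_mode_bound:
  fixes \<alpha> H \<rho> T l\<^sub>0 :: real
  assumes \<alpha>: "0 < \<alpha>" and H: "0 < H" "H < 1/2" and \<rho>: "- \<alpha>/4 - H*\<alpha>/2 < \<rho>" and l\<^sub>0: "0 < l\<^sub>0"
    and T: "0 < T"
  defines "\<kappa> \<equiv> \<alpha>/2 + H*\<alpha> + 2*\<rho>"
  obtains C where "0 \<le> C" and "\<And>M X n \<tau> l. prob_space M \<Longrightarrow> is_fbm M H X \<Longrightarrow> 1 \<le> n \<Longrightarrow> 0 < \<tau> \<Longrightarrow>
    real n * \<tau> \<le> T \<Longrightarrow> l\<^sub>0 \<le> l \<Longrightarrow>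
    (\<integral>\<^sup>+\<omega>. ennreal ((error_functional n \<tau> (l powr (\<alpha>/2)) (\<lambda>s. X s \<omega>))\<^sup>2) \<partial>M)
      \<le> ennreal (C * \<tau> powr (if \<kappa> \<le> \<alpha>/2 + H*\<alpha> then 2*\<kappa>/\<alpha> else 2*H + 1) * l powr (2*\<rho>))"
proof -
  let ?e = "if \<kappa> \<le> \<alpha>/2 + H*\<alpha> then 2*\<kappa>/\<alpha> else 2*H + 1"
  obtain K where K: "0 \<le> K" "\<And>(M :: 'a measure) X n \<tau> T \<mu> \<gamma>. prob_space M \<Longrightarrow> is_fbm M H X \<Longrightarrow> 1 \<le> n \<Longrightarrow>
      0 < \<tau> \<Longrightarrow> real n * \<tau> \<le> T \<Longrightarrow> 0 < \<mu> \<Longrightarrow> 0 \<le> \<gamma> \<Longrightarrow> \<gamma> \<le> 1 + 2*H \<Longrightarrow>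
      (\<integral>\<^sup>+\<omega>. ennreal ((error_functional n \<tau> \<mu> (\<lambda>s. X s \<omega>))\<^sup>2) \<partial>M)
        \<le> ennreal (K * T * \<tau> powr (1 + 2*H) * (\<mu> * \<tau>) powr (- \<gamma>))"
    using fbm_error_second_moment_bound[OF H, where 'a='a] by blast
  obtain \<gamma> L where \<gamma>: "0 \<le> \<gamma>" "\<gamma> \<le> 1 + 2*H" "0 \<le> L" and rate: "\<And>l \<tau>. l\<^sub>0 \<le> l \<Longrightarrow> 0 < \<tau> \<Longrightarrow>
      \<tau> powr (1 + 2*H) * (l powr (\<alpha>/2) * \<tau>) powr (- \<gamma>) \<le> L * \<tau> powr ?e * l powr (2*\<rho>)"
    using mode_rate_le[OF \<alpha> H(1) \<rho> l\<^sub>0] unfolding \<kappa>_def by blast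
  show thesis
  proof (rule that[of "K * T * L"])
    fix M :: "'a measure" and X :: "real \<Rightarrow> 'a \<Rightarrow> real" and n :: nat and \<tau> l :: real
    assume M: "prob_space M" and X: "is_fbm M H X" and n: "1 \<le> n" and \<tau>: "0 < \<tau>"
      and nT: "real n * \<tau> \<le> T" and l: "l\<^sub>0 \<le> l"
    have "(\<integral>\<^sup>+\<omega>. ennreal ((error_functional n \<tau> (l powr (\<alpha>/2)) (\<lambda>s. X s \<omega>))\<^sup>2) \<partial>M)
        \<le> ennreal (K * T * \<tau> powr (1 + 2*H) * (l powr (\<alpha>/2) * \<tau>) powr (- \<gamma>))"
      using l l\<^sub>0 \<gamma> by (intro K(2)[OF M X n \<tau> nT]) auto
    also have "\<dots> \<le> ennreal (K * T * L * \<tau> powr ?e * l powr (2*\<rho>))"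
      using mult_left_mono[OF rate[OF l \<tau>], of "K * T"] K(1) T by (intro ennreal_leI) (simp add: mult.assoc)
    finally show "(\<integral>\<^sup>+\<omega>. ennreal ((error_functional n \<tau> (l powr (\<alpha>/2)) (\<lambda>s. X s \<omega>))\<^sup>2) \<partial>M)
        \<le> ennreal (K * T * L * \<tau> powr ?e * l powr (2*\<rho>))" .
  qed (use K(1) T \<gamma>(3) in simp)
qed

theorem proposition2:
  fixes M :: "'w measure"
    and \<xi> :: "nat \<Rightarrow> real \<Rightarrow> 'w \<Rightarrow> real"
    and lam q :: "nat \<Rightarrow> real"
    and \<alpha> H T \<rho> :: real
  assumes prob: "prob_space M"
    and fbm: "\<And>i. is_fbm M H (\<xi> i)"
    and indep: "prob_space.indep_vars M (\<lambda>_. Pi\<^sub>M UNIV (\<lambda>_. borel)) (\<lambda>i \<omega> t. \<xi> i t \<omega>) UNIV"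
    and eig_pos: "0 < lam 0" and eig_mono: "mono lam" and eig_lim: "filterlim lam at_top sequentially"
    and q_nonneg: "\<And>i. 0 \<le> q i"
    and alpha: "0 < \<alpha>" "\<alpha> < 1"
    and hurst: "0 < H" "H < 1/2"
    and T: "0 < T"
    and rho: "- \<alpha>/4 - H*\<alpha>/2 < \<rho>" "\<rho> < (\<alpha>+1)/4 - H*\<alpha>/2"
    and trace: "summable (\<lambda>i. lam i powr (2*\<rho>) * q i)"
    and kappa: "0 < \<alpha>/2 + H*\<alpha> + 2*\<rho>"
  shows "\<exists>C. \<forall>N::nat. \<forall>n::nat. 0 < N \<longrightarrow> 1 \<le> n \<longrightarrow> n \<le> N \<longrightarrow>
    (let \<tau> = T / real N; \<kappa> = \<alpha>/2 + H*\<alpha> + 2*\<rho> in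
      (\<integral>\<^sup>+ \<omega>. (\<Sum>i. ennreal (q i *
          (\<Sum>j<n. integral {real j * \<tau> .. real (Suc j) * \<tau>}
             (\<lambda>s. cos (lam i powr (\<alpha>/2) * (real n * \<tau> - s)) * (\<xi> i s \<omega> - \<xi> i (real j * \<tau>) \<omega>)))\<^sup>2)) \<partial>M)
      \<le> ennreal (if \<kappa> \<le> \<alpha>/2 + H*\<alpha> then C * \<tau> powr (2*\<kappa>/\<alpha>) else C * \<tau> powr (2*H+1)))"
proof -
  define \<kappa> where "\<kappa> = \<alpha>/2 + H*\<alpha> + 2*\<rho>"
  define e where "e = (if \<kappa> \<le> \<alpha>/2 + H*\<alpha> then 2*\<kappa>/\<alpha> else 2*H + 1)"
  define S where "S = (\<Sum>i. lam i powr (2*\<rho>) * q i)"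
  have lam: "lam 0 \<le> lam i" "0 \<le> lam i powr (2*\<rho>)" for i using eig_mono by (auto simp: mono_def)
  obtain C where C: "0 \<le> C" and mode: "\<And>(M :: 'w measure) X n \<tau> l. prob_space M \<Longrightarrow> is_fbm M H X \<Longrightarrow>
      1 \<le> n \<Longrightarrow> 0 < \<tau> \<Longrightarrow> real n * \<tau> \<le> T \<Longrightarrow> lam 0 \<le> l \<Longrightarrow>
      (\<integral>\<^sup>+\<omega>. ennreal ((error_functional n \<tau> (l powr (\<alpha>/2)) (\<lambda>s. X s \<omega>))\<^sup>2) \<partial>M)
        \<le> ennreal (C * \<tau> powr e * l powr (2*\<rho>))"
    using fbm_error_mode_bound[OF alpha(1) hurst rho(1) eig_pos T, where 'a='w] unfolding e_def \<kappa>_def by blast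
  have bound: "(\<integral>\<^sup>+\<omega>. (\<Sum>i. ennreal (q i * (error_functional n (T / real N) (lam i powr (\<alpha>/2)) (\<lambda>s. \<xi> i s \<omega>))\<^sup>2)) \<partial>M)
      \<le> ennreal (C * (T / real N) powr e * S)" if "0 < N" "1 \<le> n" "n \<le> N" for N n :: nat
    unfolding S_def using that T C lam
    by (intro nn_integral_weighted_suminf_le fbm_error_functional_measurable(2)[OF fbm] mode[OF prob fbm]
        q_nonneg trace) (auto simp: field_simps)
  have rate: "(if \<kappa> \<le> \<alpha>/2 + H*\<alpha> then C * S * \<tau> powr (2*\<kappa>/\<alpha>) else C * S * \<tau> powr (2*H+1))
      = C * \<tau> powr e * S" for \<tau> :: real
    by (simp add: e_def)
  show ?thesis
    by (intro exI[of _ "C * S"] allI impI, unfold Let_def \<kappa>_def[symmetric] rate)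
      (rule bound[unfolded error_functional_real])
qed

end
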